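(* In the quantum switch model of the context (with $W=\infty$), suppose $(\lambda_{ij}+\epsilon)_{i,j\in\mathcal K}\in\Lambda$ for some $\epsilon>0$ and that Assumption 1 holds. Then the quantum switch is stable under any on-demand protocol $\pi_{\mathrm{od}}$.
   Context: Quantum switch model. There are $K$ end nodes $\mathcal K=\{1,\dots,K\}$ and a switch (node $0$); time is slotted, $t=0,1,2,\dots$; pair-indexed quantities are symmetric in $(i,j)$. In slot $t$: (i) $C_{0i}(t)\in\{0,1\}$ EPR pairs are generated between the switch and node $i$, where $\{C_{0i}(t)\}_{t\ge0}$ are mutually independent Bernoulli processes (i.i.d. in $t$) with mean $p_i$. (ii) The switch chooses nonnegative integers $F_{ij}(t)=F_{ji}(t)$ (entanglement swaps for pair $(i,j)$, each consuming one stored switch–$i$ and one stored switch–$j$ pair) with $\sum_iF_{ij}(t)\le E_{0j}(t)$; no limit on swaps per slot ($W=\infty$); each swap succeeds independently with probability $q\in(0,1]$; $R_{ij}(t)$ is the number of successes. (iii) $A_{ij}(t)\in\mathbb N$ new requests for pair $(i,j)$ arrive. Dynamics: $U_{ij}(t+1)=[U_{ij}(t)-E_{ij}(t)-R_{ij}(t)]^++A_{ij}(t)$, $E_{ij}(t+1)=[E_{ij}(t)+R_{ij}(t)-U_{ij}(t)]^+$, $E_{0i}(t+1)=E_{0i}(t)-\sum_jF_{ij}(t)+C_{0i}(t)$, with zero initial values; $U_{ij}$ = pending requests, $E_{ij}$ = stored $i$–$j$ pairs, $E_{0i}$ = stored switch–$i$ pairs; memory unlimited, no decoherence. Requests: $\{A_{ij}(t)\}_t$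 mutually independent across pairs, each stationary ergodic with rate $\lambda_{ij}$, and $\mathbb E[A_{ij}(t)^2\mid H(t)=h]\le A_{\max}^2$ for every $t,i,j$ and realization $h$ of the history $H(t)=(E_{ij}(\tau),U_{ij}(\tau),A_{ij}(\tau),R_{ij}(\tau),C_{0i}(\tau))_{\tau=0}^{t-1}$. Stability: for all $i,j$, $\limsup_{t\to\infty}\frac1t\sum_{\tau=0}^{t-1}\mathbb P[U_{ij}(\tau)>V]\to0$ as $V\to\infty$. $\Lambda$ is the set of nonnegative matrices $(\lambda_{ij})$ for which there exist nonnegative $f_{ij}=f_{ji}$ with $\sum_if_{ij}\le p_j$ for all $j$ and $\lambda_{ij}\le qf_{ij}$ for all $i,j$. Assumption 1: for every $\epsilon'>0$ there is a constant $c_1(\epsilon')$, independent of $t$, such that for all $t\ge1$ and all $i,j$, $\mathbb E\big[\sum_{\tau=0}^{t-1}A_{ij}(\tau)\,\big|\,B_1\big]\mathbb P[B_1]\le c_1(\epsilon')$, where $B_1$ is the event that $\big|\frac1t\sum_{\tau=0}^{t-1}A_{i'j'}(\tau)-\lambda_{i'j'}\big|>\epsilon'$ for some $i',j'\in\mathcal K$. On-demand protocols: a protocol is on-demand if in every slot $t$ its choices $F_{ij}=F_{ij}(t)$ satisfy $\sum_{i\in\mathcal K}F_{ij}\le E_{0j}(t)$ for all $j$; $F_{ij}\le U_{ij}(t)$ for all $i,j$; $F_{ij}=F_{ji}\in\mathbb N$; and $\big(E_{0i}(t)-\sum_kF_{ik}\big)\big(E_{0j}(t)-\sum_kF_{kj}\big)\big(U_{ij}(t)-F_{ij}\big)=0$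 for all $i,j$. *)

theory Defs
  imports "HOL-Probability.Probability"
begin

definition seqM :: "(nat \<Rightarrow> nat) measure" where
  "seqM = PiM UNIV (\<lambda>_. count_space UNIV)"

definition seq_shift :: "(nat \<Rightarrow> nat) \<Rightarrow> (nat \<Rightarrow> nat)" where
  "seq_shift x = (\<lambda>n. x (Suc n))"

definition pairs :: "nat \<Rightarrow> (nat \<times> nat) set" where
  "pairs K = {(i, j). i \<in> {1..K} \<and> j \<in> {1..K} \<and> i \<noteq> j}"

definition in_Lambda :: "nat \<Rightarrow> (nat \<Rightarrow> real) \<Rightarrow> real \<Rightarrow> (nat \<Rightarrow> nat \<Rightarrow> real) \<Rightarrow> bool" where
  "in_Lambda K p q mu \<longleftrightarrow>
     (\<forall>(i, j) \<in> pairs K. mu i j \<ge> 0) \<and>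
     (\<exists>f :: nat \<Rightarrow> nat \<Rightarrow> real.
        (\<forall>(i, j) \<in> pairs K. f i j \<ge> 0 \<and> f i j = f j i) \<and>
        (\<forall>j \<in> {1..K}. (\<Sum>i \<in> {1..K} - {j}. f i j) \<le> p j) \<and>
        (\<forall>(i, j) \<in> pairs K. mu i j \<le> q * f i j))"

definition stationary_ergodic_rate :: "'a measure \<Rightarrow> (nat \<Rightarrow> 'a \<Rightarrow> nat) \<Rightarrow> real \<Rightarrow> bool" where
  "stationary_ergodic_rate M X lam \<longleftrightarrow>
     (\<lambda>\<omega> t. X t \<omega>) \<in> measurable M seqM \<and>
     (let D = distr M seqM (\<lambda>\<omega> t. X t \<omega>) in
        distr D seqM seq_shift = D \<and>
        (\<forall>B \<in> sets seqM. seq_shift -` B \<inter> space seqM = B \<longrightarrow> emeasure D B = 0 \<or> emeasure D B = 1)) \<and>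
     integrable M (\<lambda>\<omega>. real (X 0 \<omega>)) \<and>
     (\<integral>\<omega>. real (X 0 \<omega>) \<partial>M) = lam"

definition gen_sigma :: "'a measure \<Rightarrow> ('a \<Rightarrow> nat) set \<Rightarrow> 'a measure" where
  "gen_sigma M Xs = sigma (space M) (\<Union>X \<in> Xs. {X -` B \<inter> space M | B. True})"

definition history :: "'a measure \<Rightarrow> nat \<Rightarrow> (nat \<Rightarrow> nat \<Rightarrow> nat \<Rightarrow> 'a \<Rightarrow> nat)
    \<Rightarrow> (nat \<Rightarrow> nat \<Rightarrow> nat \<Rightarrow> 'a \<Rightarrow> nat) \<Rightarrow> (nat \<Rightarrow> nat \<Rightarrow> nat \<Rightarrow> 'a \<Rightarrow> nat)
    \<Rightarrow> (nat \<Rightarrow> nat \<Rightarrow> nat \<Rightarrow> 'a \<Rightarrow> nat) \<Rightarrow> (nat \<Rightarrow> nat \<Rightarrow> 'a \<Rightarrow> nat) \<Rightarrow> nat \<Rightarrow> 'a measure" where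
  "history M K E U A R C t = gen_sigma M
     ((\<Union>(i, j) \<in> pairs K. \<Union>\<tau> \<in> {..<t}. {E i j \<tau>, U i j \<tau>, A i j \<tau>, R i j \<tau>}) \<union>
      (\<Union>i \<in> {1..K}. \<Union>\<tau> \<in> {..<t}. {C i \<tau>}))"

text \<open>All exogenous randomness up to (excluding) slot t: arrivals, EPR generations and swap coins.
  Protocol decisions in slot t are required to be measurable w.r.t. this sigma-algebra.\<close>
definition past :: "'a measure \<Rightarrow> nat \<Rightarrow> (nat \<Rightarrow> nat \<Rightarrow> nat \<Rightarrow> 'a \<Rightarrow> nat)
    \<Rightarrow> (nat \<Rightarrow> nat \<Rightarrow> 'a \<Rightarrow> nat) \<Rightarrow> (nat \<Rightarrow> nat \<Rightarrow> nat \<Rightarrow> nat \<Rightarrow> 'a \<Rightarrow> nat) \<Rightarrow> nat \<Rightarrow> 'a measure" where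
  "past M K A C S t = gen_sigma M
     ((\<Union>(i, j) \<in> pairs K. \<Union>\<tau> \<in> {..<t}. {A i j \<tau>} \<union> (\<Union>k. {S i j \<tau> k})) \<union>
      (\<Union>i \<in> {1..K}. \<Union>\<tau> \<in> {..<t}. {C i \<tau>}))"

text \<open>Sources of exogenous randomness, all viewed as random sequences:
  EPR generation C_0i(t), the whole arrival process of an unordered pair, and the
  k-th swap coin of an unordered pair in slot t.\<close>
datatype src = SrcC nat nat | SrcA nat nat | SrcS nat nat nat nat

fun sources :: "(nat \<Rightarrow> nat \<Rightarrow> 'a \<Rightarrow> nat) \<Rightarrow> (nat \<Rightarrow> nat \<Rightarrow> nat \<Rightarrow> 'a \<Rightarrow> nat)
    \<Rightarrow> (nat \<Rightarrow> nat \<Rightarrow> nat \<Rightarrow> nat \<Rightarrow> 'a \<Rightarrow> nat) \<Rightarrow> src \<Rightarrow> 'a \<Rightarrow> nat \<Rightarrow> nat" where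
  "sources C A S (SrcC i t) = (\<lambda>\<omega> _. C i t \<omega>)"
| "sources C A S (SrcA i j) = (\<lambda>\<omega> t. A i j t \<omega>)"
| "sources C A S (SrcS i j t k) = (\<lambda>\<omega> _. S i j t k \<omega>)"

definition src_index :: "nat \<Rightarrow> src set" where
  "src_index K = {SrcC i t | i t. i \<in> {1..K}}
     \<union> {SrcA i j | i j. 1 \<le> i \<and> i < j \<and> j \<le> K}
     \<union> {SrcS i j t k | i j t k. 1 \<le> i \<and> i < j \<and> j \<le> K}"

definition stable :: "'a measure \<Rightarrow> nat \<Rightarrow> (nat \<Rightarrow> nat \<Rightarrow> nat \<Rightarrow> 'a \<Rightarrow> nat) \<Rightarrow> bool" where
  "stable M K U \<longleftrightarrow> (\<forall>(i, j) \<in> pairs K.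
     ((\<lambda>V::real. limsup (\<lambda>t. ereal (1 / real t *
         (\<Sum>\<tau> < t. measure M {\<omega> \<in> space M. real (U i j \<tau> \<omega>) > V})))) \<longlongrightarrow> 0) at_top)"

end

theory Submission
  imports Defs
begin

(* Since an on-demand protocol only swaps for pending requests, no end-to-end pair is ever stored
   and the pending requests of a pair evolve as U(s+1) = U(s) - R(s) + A(s).  If some request of
   (i, j) is not attempted in slot s, the on-demand condition forces node i (or j) to have used up
   its memory; then U_ij(s+1) is at most the arrivals at that node minus q times its generated
   links, up to centred swap and generation noise.  As the rates lie strictly inside q times the
   capacity region, this quantity has mean bounded uniformly in s: Assumption 1 controls the
   arrival excess, and second-moment bounds on the noise control its positive part.  Otherwise
   every pending request is attempted and each attempt succeeds with probability q.  Hence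
   E U(s+1) <= c + (1 - q) E U(s) + E A(s), so the Cesaro means of E U are bounded and Markov's
   inequality gives stability. *)

lemma sum_lessThan_if_less:
  "(n::nat) \<le> m \<Longrightarrow> (\<Sum>l<m. if l < n then g l else 0) = (\<Sum>l<n. g l)"
proof -
  assume "n \<le> m"
  then have "{l \<in> {..<m}. l < n} = {..<n}"
    by auto
  then show ?thesis
    by (metis (no_types) sum.inter_filter finite_lessThan)
qed

lemma pos_part_le_square_div:
  fixes x a :: real
  assumes "a > 0"
  shows "max 0 (x - a) \<le> x\<^sup>2 / (4 * a)"
proof -
  have "4 * a * (x - a) \<le> x\<^sup>2"
    using sum_power2_ge_zero[of "x - 2 * a" 0] by (simp add: power2_eq_square algebra_simps)
  with assms show ?thesis by (simp add: field_simps)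
qed

lemma sum_le_from_contraction:
  fixes u a :: "nat \<Rightarrow> real"
  assumes "u 0 = 0" "\<And>s. 0 \<le> u s" "\<And>s. u (Suc s) \<le> b + (1 - q) * u s + a s"
  shows "q * (\<Sum>s<t. u s) \<le> b * real t + (\<Sum>s<t. a s)"
proof -
  have "(\<Sum>s<t. u s) \<le> (\<Sum>s<Suc t. u s)"
    using assms(2) by simp
  also have "\<dots> = (\<Sum>s<t. u (Suc s))"
    unfolding sum.lessThan_Suc_shift using assms(1) by simp
  also have "\<dots> \<le> (\<Sum>s<t. b + (1 - q) * u s + a s)"
    by (intro sum_mono assms(3))
  also have "\<dots> = b * real t + (1 - q) * (\<Sum>s<t. u s) + (\<Sum>s<t. a s)"
    by (simp add: sum.distrib sum_distrib_left)
  finally show ?thesis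
    by (simp add: algebra_simps)
qed

context prob_space
begin

lemma integrable_bounded:
  fixes f :: "'a \<Rightarrow> real"
  assumes "f \<in> borel_measurable M" "\<And>x. x \<in> space M \<Longrightarrow> \<bar>f x\<bar> \<le> B"
  shows "integrable M f"
  using assms by (intro integrable_const_bound[where B=B]) auto

lemma integral_zero_one_nat:
  assumes [measurable]: "X \<in> measurable M (count_space UNIV)"
    and le1: "\<And>x. x \<in> space M \<Longrightarrow> X x \<le> 1"
  shows "(\<integral>x. real (X x) \<partial>M) = prob {x \<in> space M. X x = 1}"
proof -
  have "(\<integral>x. real (X x) \<partial>M) = (\<integral>x. indicator {x \<in> space M. X x = 1} x \<partial>M)"
  proof (rule Bochner_Integration.integral_cong[OF refl])
    fix x assume "x \<in> space M"
    with le1[of x] show "real (X x) = indicator {x \<in> space M. X x = 1} x"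
      by (cases "X x") (auto simp: indicator_def)
  qed
  then show ?thesis
    by simp
qed

lemma integral_square_add_orthogonal:
  fixes X D :: "'a \<Rightarrow> real"
  assumes [measurable]: "X \<in> borel_measurable M" "D \<in> borel_measurable M"
    and X_bd: "\<And>x. x \<in> space M \<Longrightarrow> \<bar>X x\<bar> \<le> B"
    and D_bd: "\<And>x. x \<in> space M \<Longrightarrow> \<bar>D x\<bar> \<le> 1"
    and orth: "(\<integral>x. X x * D x \<partial>M) = 0"
  shows "(\<integral>x. (X x + D x)\<^sup>2 \<partial>M) = (\<integral>x. (X x)\<^sup>2 \<partial>M) + (\<integral>x. (D x)\<^sup>2 \<partial>M)"
proof -
  have prod_bd: "\<bar>X x * D x\<bar> \<le> B" and sq_bd: "\<bar>(X x)\<^sup>2\<bar> \<le> B\<^sup>2" "\<bar>(D x)\<^sup>2\<bar> \<le> 1"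
    if "x \<in> space M" for x
  proof -
    have "\<bar>X x\<bar> * \<bar>D x\<bar> \<le> B * 1" "\<bar>X x\<bar>\<^sup>2 \<le> B\<^sup>2"
      using X_bd[OF that] D_bd[OF that]
      by (intro mult_mono power_mono; simp)+
    then show "\<bar>X x * D x\<bar> \<le> B" "\<bar>(X x)\<^sup>2\<bar> \<le> B\<^sup>2" "\<bar>(D x)\<^sup>2\<bar> \<le> 1"
      using D_bd[OF that] by (auto simp: abs_mult abs_square_le_1)
  qed
  have "integrable M (\<lambda>x. (X x)\<^sup>2)" "integrable M (\<lambda>x. X x * D x)" "integrable M (\<lambda>x. (D x)\<^sup>2)"
    by (rule integrable_bounded[OF _ sq_bd(1)] integrable_bounded[OF _ prod_bd]
        integrable_bounded[OF _ sq_bd(2)]; measurable)+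
  then have "(\<integral>x. (X x)\<^sup>2 + 2 * (X x * D x) + (D x)\<^sup>2 \<partial>M)
      = (\<integral>x. (X x)\<^sup>2 \<partial>M) + 2 * (\<integral>x. X x * D x \<partial>M) + (\<integral>x. (D x)\<^sup>2 \<partial>M)"
    by simp
  moreover have "(\<lambda>x. (X x + D x)\<^sup>2) = (\<lambda>x. (X x)\<^sup>2 + 2 * (X x * D x) + (D x)\<^sup>2)"
    by (simp add: power2_sum algebra_simps)
  ultimately show ?thesis
    using orth by simp
qed

lemma integral_pos_part_le_second_moment:
  fixes Z :: "'a \<Rightarrow> real"
  assumes [measurable]: "Z \<in> borel_measurable M"
    and Z_bd: "\<And>x. x \<in> space M \<Longrightarrow> \<bar>Z x\<bar> \<le> B"
    and second: "(\<integral>x. (Z x)\<^sup>2 \<partial>M) \<le> t" and "\<delta> > 0" "t > 0"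
  shows "integrable M (\<lambda>x. max 0 (Z x - \<delta> * t))"
    and "(\<integral>x. max 0 (Z x - \<delta> * t) \<partial>M) \<le> 1 / (4 * \<delta>)"
proof -
  have a: "\<delta> * t > 0"
    using assms by simp
  show int: "integrable M (\<lambda>x. max 0 (Z x - \<delta> * t))"
  proof (rule integrable_bounded[where B=B])
    fix x assume "x \<in> space M"
    then show "\<bar>max 0 (Z x - \<delta> * t)\<bar> \<le> B"
      using Z_bd[of x] a by (auto simp: abs_le_iff)
  qed measurable
  have "\<bar>(Z x)\<^sup>2\<bar> \<le> B\<^sup>2" if "x \<in> space M" for x
    using power_mono[OF Z_bd[OF that] abs_ge_zero, of 2] by simp
  then have "integrable M (\<lambda>x. (Z x)\<^sup>2)"
    by (intro integrable_bounded) auto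
  then have "(\<integral>x. max 0 (Z x - \<delta> * t) \<partial>M) \<le> (\<integral>x. (Z x)\<^sup>2 / (4 * (\<delta> * t)) \<partial>M)"
    by (intro integral_mono int pos_part_le_square_div[OF a]) auto
  also have "\<dots> = (\<integral>x. (Z x)\<^sup>2 \<partial>M) / (4 * (\<delta> * t))"
    by simp
  also have "\<dots> \<le> t / (4 * (\<delta> * t))"
    using second a by (intro divide_right_mono) auto
  also have "\<dots> = 1 / (4 * \<delta>)"
    using \<open>t > 0\<close> by simp
  finally show "(\<integral>x. max 0 (Z x - \<delta> * t) \<partial>M) \<le> 1 / (4 * \<delta>)" .
qed

lemma cesaro_tail_prob_tendsto_zero:
  fixes Y :: "nat \<Rightarrow> 'a \<Rightarrow> real"
  assumes int: "\<And>\<tau>. integrable M (Y \<tau>)"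
    and nonneg: "\<And>\<tau> x. x \<in> space M \<Longrightarrow> 0 \<le> Y \<tau> x"
    and mean: "\<And>t. t \<ge> 1 \<Longrightarrow> (\<Sum>\<tau><t. \<integral>x. Y \<tau> x \<partial>M) \<le> c * real t"
  shows "((\<lambda>V. limsup (\<lambda>t. ereal (1 / real t * (\<Sum>\<tau><t. prob {x \<in> space M. Y \<tau> x > V}))))
           \<longlongrightarrow> 0) at_top"
proof (rule tendsto_sandwich[OF _ _ tendsto_const])
  let ?L = "\<lambda>V. limsup (\<lambda>t. ereal (1 / real t * (\<Sum>\<tau><t. prob {x \<in> space M. Y \<tau> x > V})))"
  show "\<forall>\<^sub>F V in at_top. 0 \<le> ?L V"
    by (intro always_eventually allI le_Limsup) (auto intro!: always_eventually divide_nonneg_nonneg sum_nonneg)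
  have Markov: "prob {x \<in> space M. Y \<tau> x > V} \<le> (\<integral>x. Y \<tau> x \<partial>M) / V" if "V > 0" for V \<tau>
  proof -
    have "prob {x \<in> space M. Y \<tau> x > V} \<le> prob {x \<in> space M. Y \<tau> x \<ge> V}"
      using int[of \<tau>] by (intro finite_measure_mono) auto
    also have "\<dots> \<le> (\<integral>x. Y \<tau> x \<partial>M) / V"
      by (rule integral_Markov_inequality_measure[OF int, where A="space M"]) (use that nonneg in auto)
    finally show ?thesis .
  qed
  have bound: "?L V \<le> ereal (c / V)" if "V > 0" for V
  proof (rule Limsup_bounded)
    show "\<forall>\<^sub>F t in sequentially.
            ereal (1 / real t * (\<Sum>\<tau><t. prob {x \<in> space M. Y \<tau> x > V})) \<le> ereal (c / V)"
      using eventually_ge_at_top[of "1::nat"]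
    proof eventually_elim
      case (elim t)
      have "(\<Sum>\<tau><t. prob {x \<in> space M. Y \<tau> x > V}) \<le> (\<Sum>\<tau><t. (\<integral>x. Y \<tau> x \<partial>M) / V)"
        by (intro sum_mono Markov that)
      also have "\<dots> \<le> c * real t / V"
        unfolding sum_divide_distrib[symmetric] using mean[OF elim] that by (intro divide_right_mono) auto
      finally show ?case
        using elim that by (simp add: field_simps)
    qed
  qed
  show "\<forall>\<^sub>F V in at_top. ?L V \<le> ereal (c / V)"
    using eventually_gt_at_top[of "0::real"] by eventually_elim (rule bound)
  show "((\<lambda>V. ereal (c / V)) \<longlongrightarrow> 0) at_top"
    unfolding zero_ereal_def
    by (intro tendsto_ereal tendsto_divide_0[OF tendsto_const]
        filterlim_at_top_imp_at_infinity filterlim_ident)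
qed

end

section \<open>Sigma-algebras generated by families of random variables\<close>

definition family_sigma :: "'a measure \<Rightarrow> 'b measure \<Rightarrow> ('i \<Rightarrow> 'a \<Rightarrow> 'b) \<Rightarrow> 'i set \<Rightarrow> 'a measure"
  where "family_sigma M N X J = sigma (space M) (\<Union>i\<in>J. {X i -` B \<inter> space M | B. B \<in> sets N})"

lemma space_family_sigma [simp]: "space (family_sigma M N X J) = space M"
  unfolding family_sigma_def by (simp add: space_measure_of_conv)

lemma sets_family_sigma:
  "sets (family_sigma M N X J) = sigma_sets (space M) (\<Union>i\<in>J. {X i -` B \<inter> space M | B. B \<in> sets N})"
  unfolding family_sigma_def by (rule sets_measure_of) auto

lemma measurable_family_sigma_mono:
  "J \<subseteq> J' \<Longrightarrow> f \<in> measurable (family_sigma M N X J) L \<Longrightarrow> f \<in> measurable (family_sigma M N X J') L"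
  unfolding family_sigma_def by (rule subsetD[OF measurable_mono1]) auto

lemma measurable_family_sigma_member:
  assumes "i \<in> J" "X i \<in> measurable M N"
  shows "X i \<in> measurable (family_sigma M N X J) N"
proof (rule measurableI)
  fix B assume "B \<in> sets N"
  then show "X i -` B \<inter> space (family_sigma M N X J) \<in> sets (family_sigma M N X J)"
    using assms unfolding sets_family_sigma by auto
qed (use assms(2) in \<open>auto dest: measurable_space\<close>)

lemma subalgebra_family_sigma:
  assumes "\<And>i. i \<in> J \<Longrightarrow> X i \<in> measurable M N"
  shows "subalgebra M (family_sigma M N X J)"
  unfolding subalgebra_def sets_family_sigma
  using assms by (auto intro!: sigma_sets_le_sets_iff[THEN iffD2] measurable_sets)

lemma (in prob_space) indep_set_family_sigma_disjoint:
  assumes indep: "indep_vars (\<lambda>_. N) X I" and J: "J1 \<subseteq> I" "J2 \<subseteq> I" "J1 \<inter> J2 = {}"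
  shows "indep_set (sets (family_sigma M N X J1)) (sets (family_sigma M N X J2))"
proof -
  define pre where "pre i = {X i -` B \<inter> space M | B. B \<in> sets N}" for i
  define Js where "Js = case_bool J1 J2"
  have "indep_sets pre I"
    using indep unfolding indep_vars_def2 pre_def by auto
  then have "indep_sets pre (\<Union>b. Js b)"
    by (rule indep_sets_mono_index[rotated]) (use J in \<open>auto simp: Js_def split: bool.splits\<close>)
  moreover have "Int_stable (pre i)" for i
  proof (rule Int_stableI)
    fix a b assume "a \<in> pre i" "b \<in> pre i"
    then obtain Ba Bb where "a = X i -` Ba \<inter> space M" "b = X i -` Bb \<inter> space M" "Ba \<in> sets N" "Bb \<in> sets N"
      unfolding pre_def by blast
    then show "a \<inter> b \<in> pre i"
      unfolding pre_def by (intro CollectI exI[of _ "Ba \<inter> Bb"]) auto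
  qed
  moreover have "disjoint_family Js"
    using J unfolding disjoint_family_on_def Js_def by (auto split: bool.split)
  ultimately have "indep_sets (\<lambda>b. sigma_sets (space M) (\<Union>i\<in>Js b. pre i)) UNIV"
    by (rule indep_sets_collect_sigma)
  then show ?thesis
    unfolding indep_set_def
    by (rule indep_sets_mono_sets) (auto simp: Js_def pre_def sets_family_sigma split: bool.split)
qed

lemma (in prob_space) integral_mult_family_sigma_disjoint:
  fixes g h :: "'a \<Rightarrow> real"
  assumes indep: "indep_vars (\<lambda>_. N) X I" and J: "J1 \<subseteq> I" "J2 \<subseteq> I" "J1 \<inter> J2 = {}"
    and g: "g \<in> borel_measurable (family_sigma M N X J1)"
    and h: "h \<in> borel_measurable (family_sigma M N X J2)"
    and int: "integrable M g" "integrable M h"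
  shows "(\<integral>x. g x * h x \<partial>M) = (\<integral>x. g x \<partial>M) * (\<integral>x. h x \<partial>M)"
proof -
  have generated: "sigma_sets (space M) {f -` B \<inter> space M | B. B \<in> sets borel} \<subseteq> sets F"
    if "f \<in> borel_measurable F" "space F = space M" for f :: "'a \<Rightarrow> real" and F
  proof -
    have "{f -` B \<inter> space F | B. B \<in> sets borel} \<subseteq> sets F"
      using measurable_sets[OF that(1)] by auto
    then show ?thesis
      using sigma_sets_le_sets_iff[of F] that(2) by simp
  qed
  have "indep_set (sigma_sets (space M) {g -` B \<inter> space M | B. B \<in> sets borel})
      (sigma_sets (space M) {h -` B \<inter> space M | B. B \<in> sets borel})"
    using indep_set_family_sigma_disjoint[OF indep J] unfolding indep_set_def
    by (rule indep_sets_mono_sets) (use generated[OF g] generated[OF h] in \<open>auto split: bool.split\<close>)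
  then have "indep_var borel g borel h"
    unfolding indep_var_eq using int by (simp add: borel_measurable_integrable)
  then show ?thesis
    using indep_var_lebesgue_integral int by blast
qed

lemma subalgebra_gen_sigma:
  assumes "\<And>X. X \<in> Xs \<Longrightarrow> X \<in> measurable F (count_space UNIV)" and "space F = space M"
  shows "subalgebra F (gen_sigma M Xs)"
proof -
  have "(\<Union>X\<in>Xs. {X -` B \<inter> space M | B. True}) \<subseteq> sets F"
    using assms measurable_sets[of _ F "count_space UNIV"] by fastforce
  then show ?thesis
    unfolding subalgebra_def gen_sigma_def using assms(2)
    by (auto simp: space_measure_of_conv sets_measure_of_conv sigma_sets_le_sets_iff[of F, simplified assms(2)])
qed

lemma measurable_real_of_nat [measurable (raw)]:
  "f \<in> measurable N (count_space UNIV) \<Longrightarrow> (\<lambda>x. real (f x :: nat)) \<in> borel_measurable N"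
  by (rule measurable_compose[of f N "count_space UNIV"]) auto

lemma measurable_sum_nat:
  "(\<And>t. t < n \<Longrightarrow> f t \<in> measurable N (count_space UNIV)) \<Longrightarrow>
    (\<lambda>x. \<Sum>t<(n::nat). f t x :: nat) \<in> measurable N (count_space UNIV)"
proof (induction n)
  case (Suc n)
  have [measurable]: "f n \<in> measurable N (count_space UNIV)"
    "(\<lambda>x. \<Sum>t<n. f t x) \<in> measurable N (count_space UNIV)"
    using Suc by simp_all
  show ?case
    by simp
qed simp

lemma pred_le_nat [measurable (raw)]:
  assumes "f \<in> measurable N (count_space UNIV)" "g \<in> measurable N (count_space UNIV)"
  shows "Measurable.pred N (\<lambda>x. (f x :: nat) \<le> g x)"
proof -
  have "(\<lambda>x. (\<lambda>n x. n \<le> g x) (f x) x) \<in> measurable N (count_space UNIV)"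
    by (rule measurable_compose_countable'[where I=UNIV]) (use assms in auto)
  then show ?thesis
    by (simp add: pred_def measurable_count_space_eq2)
qed

section \<open>Pathwise dynamics under an on-demand protocol\<close>

locale quantum_switch = prob_space M for M :: "'a measure" +
  fixes K :: nat
    and p :: "nat \<Rightarrow> real" and q :: "real" and lam :: "nat \<Rightarrow> nat \<Rightarrow> real" and eps :: real
    and C :: "nat \<Rightarrow> nat \<Rightarrow> 'a \<Rightarrow> nat"
    and A :: "nat \<Rightarrow> nat \<Rightarrow> nat \<Rightarrow> 'a \<Rightarrow> nat"
    and S :: "nat \<Rightarrow> nat \<Rightarrow> nat \<Rightarrow> nat \<Rightarrow> 'a \<Rightarrow> nat"
    and F U E R :: "nat \<Rightarrow> nat \<Rightarrow> nat \<Rightarrow> 'a \<Rightarrow> nat"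
    and E0 :: "nat \<Rightarrow> nat \<Rightarrow> 'a \<Rightarrow> nat"
  assumes q: "0 < q" "q \<le> 1"
    and indep: "prob_space.indep_vars M (\<lambda>_. seqM) (sources C A S) (src_index K)"
    and C_bern: "\<And>i t. i \<in> {1..K} \<Longrightarrow> (\<forall>\<omega>\<in>space M. C i t \<omega> \<le> 1)
                   \<and> measure M {\<omega> \<in> space M. C i t \<omega> = 1} = p i"
    and S_sym: "\<And>i j t k. S i j t k = S j i t k"
    and S_bern: "\<And>i j t k. (i, j) \<in> pairs K \<Longrightarrow> (\<forall>\<omega>\<in>space M. S i j t k \<omega> \<le> 1)
                   \<and> measure M {\<omega> \<in> space M. S i j t k \<omega> = 1} = q"
    and A_sym: "\<And>i j t. A i j t = A j i t"
    and A_erg: "\<And>i j. (i, j) \<in> pairs K \<Longrightarrow> stationary_ergodic_rate M (A i j) (lam i j)"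
    and eps: "eps > 0"
    and capacity: "in_Lambda K p q (\<lambda>i j. lam i j + eps)"
    and arrival_tails: "\<And>eps'. eps' > 0 \<Longrightarrow> \<exists>c1::real. \<forall>t \<ge> 1. \<forall>(i, j) \<in> pairs K.
        (\<integral>\<^sup>+ \<omega>. indicator {\<omega> \<in> space M. \<exists>(i', j') \<in> pairs K.
                 \<bar>(\<Sum>\<tau> < t. real (A i' j' \<tau> \<omega>)) / real t - lam i' j'\<bar> > eps'} \<omega>
              * ennreal (\<Sum>\<tau> < t. real (A i j \<tau> \<omega>)) \<partial>M) \<le> ennreal c1"
    and init: "\<And>i j \<omega>. U i j 0 \<omega> = 0 \<and> E i j 0 \<omega> = 0 \<and> E0 i 0 \<omega> = 0"
    and R_def: "\<And>i j t \<omega>. (i, j) \<in> pairs K \<Longrightarrow> R i j t \<omega> = (\<Sum>k < F i j t \<omega>. S i j t k \<omega>)"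
    and U_step: "\<And>i j t \<omega>. (i, j) \<in> pairs K \<Longrightarrow>
        U i j (Suc t) \<omega> = (U i j t \<omega> - E i j t \<omega> - R i j t \<omega>) + A i j t \<omega>"
    and E_step: "\<And>i j t \<omega>. (i, j) \<in> pairs K \<Longrightarrow>
        E i j (Suc t) \<omega> = (E i j t \<omega> + R i j t \<omega>) - U i j t \<omega>"
    and E0_step: "\<And>i t \<omega>. i \<in> {1..K} \<Longrightarrow>
        E0 i (Suc t) \<omega> = E0 i t \<omega> - (\<Sum>j \<in> {1..K} - {i}. F i j t \<omega>) + C i t \<omega>"
    and F_meas: "\<And>i j t. (i, j) \<in> pairs K \<Longrightarrow>
        F i j t \<in> measurable (past M K A C S t) (count_space UNIV)"
    and F_sym: "\<And>i j t \<omega>. F i j t \<omega> = F j i t \<omega>"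
    and od_cap: "\<And>j t \<omega>. j \<in> {1..K} \<Longrightarrow> (\<Sum>i \<in> {1..K} - {j}. F i j t \<omega>) \<le> E0 j t \<omega>"
    and od_dem: "\<And>i j t \<omega>. (i, j) \<in> pairs K \<Longrightarrow> F i j t \<omega> \<le> U i j t \<omega>"
    and od_max: "\<And>i j t \<omega>. (i, j) \<in> pairs K \<Longrightarrow>
        (E0 i t \<omega> - (\<Sum>k \<in> {1..K} - {i}. F i k t \<omega>)) * (E0 j t \<omega> - (\<Sum>k \<in> {1..K} - {j}. F k j t \<omega>))
          * (U i j t \<omega> - F i j t \<omega>) = 0"
begin

lemma pairs_sym: "(i, j) \<in> pairs K \<Longrightarrow> (j, i) \<in> pairs K"
  by (auto simp: pairs_def)

lemma pairs_row: "i \<in> {1..K} \<Longrightarrow> k \<in> {1..K} - {i} \<Longrightarrow> (i, k) \<in> pairs K"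
  by (auto simp: pairs_def)

lemma R_sym: "(i, j) \<in> pairs K \<Longrightarrow> R i j t \<omega> = R j i t \<omega>"
  using R_def[of i j] R_def[of j i] pairs_sym[of i j] F_sym S_sym by simp

lemma R_le_F: "(i, j) \<in> pairs K \<Longrightarrow> \<omega> \<in> space M \<Longrightarrow> R i j t \<omega> \<le> F i j t \<omega>"
  using sum_mono[of "{..<F i j t \<omega>}" "\<lambda>k. S i j t k \<omega>" "\<lambda>_. 1"] S_bern[of i j] R_def[of i j]
  by auto

lemma R_le_U: "(i, j) \<in> pairs K \<Longrightarrow> \<omega> \<in> space M \<Longrightarrow> R i j t \<omega> \<le> U i j t \<omega>"
  using R_le_F od_dem le_trans by blast

lemma E_zero: "(i, j) \<in> pairs K \<Longrightarrow> \<omega> \<in> space M \<Longrightarrow> E i j t \<omega> = 0"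
  by (induction t) (use init E_step R_le_U in auto)

lemma U_Suc_add_R:
  "(i, j) \<in> pairs K \<Longrightarrow> \<omega> \<in> space M \<Longrightarrow> U i j (Suc t) \<omega> + R i j t \<omega> = U i j t \<omega> + A i j t \<omega>"
  using U_step[of i j t \<omega>] E_zero[of i j \<omega> t] R_le_U[of i j \<omega> t] by simp

lemma U_sym: "(i, j) \<in> pairs K \<Longrightarrow> U i j t \<omega> = U j i t \<omega>"
proof -
  assume ij: "(i, j) \<in> pairs K"
  have "U i j t \<omega> = U j i t \<omega> \<and> E i j t \<omega> = E j i t \<omega>"
    by (induction t) (use init U_step[OF ij] U_step[OF pairs_sym[OF ij]] E_step[OF ij]
        E_step[OF pairs_sym[OF ij]] R_sym[OF ij] A_sym in auto)
  then show ?thesis ..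
qed

definition generated :: "nat \<Rightarrow> nat \<Rightarrow> 'a \<Rightarrow> nat" where
  "generated i t \<omega> = (\<Sum>\<tau><t. C i \<tau> \<omega>)"

definition consumed :: "nat \<Rightarrow> nat \<Rightarrow> 'a \<Rightarrow> nat" where
  "consumed i t \<omega> = (\<Sum>\<tau><t. \<Sum>k\<in>{1..K} - {i}. F i k \<tau> \<omega>)"

definition attempts :: "nat \<Rightarrow> nat \<Rightarrow> nat \<Rightarrow> 'a \<Rightarrow> nat" where
  "attempts a b t \<omega> = (\<Sum>\<tau><t. F a b \<tau> \<omega>)"

definition successes :: "nat \<Rightarrow> nat \<Rightarrow> nat \<Rightarrow> 'a \<Rightarrow> nat" where
  "successes a b t \<omega> = (\<Sum>\<tau><t. R a b \<tau> \<omega>)"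

definition arrivals :: "nat \<Rightarrow> nat \<Rightarrow> nat \<Rightarrow> 'a \<Rightarrow> real" where
  "arrivals a b t \<omega> = (\<Sum>\<tau><t. real (A a b \<tau> \<omega>))"

definition swap_dev :: "nat \<Rightarrow> nat \<Rightarrow> nat \<Rightarrow> 'a \<Rightarrow> real" where
  "swap_dev a b t \<omega> = q * real (attempts a b t \<omega>) - real (successes a b t \<omega>)"

definition gen_dev :: "nat \<Rightarrow> nat \<Rightarrow> 'a \<Rightarrow> real" where
  "gen_dev i t \<omega> = p i * real t - real (generated i t \<omega>)"

lemma row_le_E0: "i \<in> {1..K} \<Longrightarrow> (\<Sum>k\<in>{1..K} - {i}. F i k t \<omega>) \<le> E0 i t \<omega>"
  using od_cap[of i t \<omega>] F_sym by simp

lemma E0_add_consumed: "i \<in> {1..K} \<Longrightarrow> E0 i t \<omega> + consumed i t \<omega> = generated i t \<omega>"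
proof (induction t)
  case (Suc t)
  then show ?case
    using E0_step[of i t \<omega>] row_le_E0[of i t \<omega>] by (simp add: consumed_def generated_def)
qed (simp add: init consumed_def generated_def)

lemma generated_le: "i \<in> {1..K} \<Longrightarrow> \<omega> \<in> space M \<Longrightarrow> generated i t \<omega> \<le> t"
  using sum_mono[of "{..<t}" "\<lambda>\<tau>. C i \<tau> \<omega>" "\<lambda>_. 1"] C_bern[of i] by (auto simp: generated_def)

lemma F_le:
  assumes ij: "(i, j) \<in> pairs K" and \<omega>: "\<omega> \<in> space M"
  shows "F i j t \<omega> \<le> t"
proof -
  have i: "i \<in> {1..K}" and j: "j \<in> {1..K} - {i}"
    using ij by (auto simp: pairs_def)
  have "F i j t \<omega> \<le> (\<Sum>k\<in>{1..K} - {i}. F i k t \<omega>)"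
    by (rule member_le_sum) (use j in auto)
  also have "\<dots> \<le> E0 i t \<omega>"
    using row_le_E0[OF i] .
  also have "\<dots> \<le> generated i t \<omega>"
    using E0_add_consumed[OF i, of t \<omega>] by simp
  also have "\<dots> \<le> t"
    using generated_le[OF i \<omega>] .
  finally show ?thesis .
qed

lemma attempts_le: "(i, j) \<in> pairs K \<Longrightarrow> \<omega> \<in> space M \<Longrightarrow> attempts i j t \<omega> \<le> t"
proof -
  assume ij: "(i, j) \<in> pairs K" and \<omega>: "\<omega> \<in> space M"
  then have i: "i \<in> {1..K}" and j: "j \<in> {1..K} - {i}"
    by (auto simp: pairs_def)
  have "attempts i j t \<omega> \<le> consumed i t \<omega>"
    unfolding attempts_def consumed_def by (intro sum_mono member_le_sum) (use j in auto)
  also have "\<dots> \<le> t"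
    using E0_add_consumed[OF i, of t \<omega>] generated_le[OF i \<omega>, of t] by simp
  finally show ?thesis .
qed

lemma swap_dev_bound: "(a, b) \<in> pairs K \<Longrightarrow> \<omega> \<in> space M \<Longrightarrow> \<bar>swap_dev a b t \<omega>\<bar> \<le> real t"
proof -
  assume ab: "(a, b) \<in> pairs K" and \<omega>: "\<omega> \<in> space M"
  have "successes a b t \<omega> \<le> attempts a b t \<omega>"
    unfolding successes_def attempts_def by (intro sum_mono R_le_F[OF ab \<omega>])
  moreover have "0 \<le> q * real (attempts a b t \<omega>)" "q * real (attempts a b t \<omega>) \<le> real (attempts a b t \<omega>)"
    using q by (simp_all add: mult_left_le_one_le)
  ultimately show ?thesis
    unfolding swap_dev_def using attempts_le[OF ab \<omega>, of t] by (auto simp flip: of_nat_le_iff)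
qed

lemma p_nonneg: "i \<in> {1..K} \<Longrightarrow> 0 \<le> p i"
  using C_bern[of i 0] measure_nonneg by metis

lemma p_le_1: "i \<in> {1..K} \<Longrightarrow> p i \<le> 1"
  using C_bern[of i 0] prob_le_1 by metis

lemma gen_dev_bound: "i \<in> {1..K} \<Longrightarrow> \<omega> \<in> space M \<Longrightarrow> \<bar>gen_dev i t \<omega>\<bar> \<le> real t"
proof -
  assume i: "i \<in> {1..K}" and \<omega>: "\<omega> \<in> space M"
  have "0 \<le> p i" "p i \<le> 1"
    using p_nonneg[OF i] p_le_1[OF i] .
  then have "0 \<le> p i * real t" "p i * real t \<le> real t"
    by (simp_all add: mult_left_le_one_le)
  then show ?thesis
    unfolding gen_dev_def using generated_le[OF i \<omega>, of t] by auto
qed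

text \<open>Every arrived request is either pending or served by a successful swap.\<close>

lemma U_eq_deviations:
  assumes ij: "(i, j) \<in> pairs K" and \<omega>: "\<omega> \<in> space M"
  shows "real (U i j t \<omega>) = arrivals i j t \<omega> - q * real (attempts i j t \<omega>) + swap_dev i j t \<omega>"
proof -
  have "U i j t \<omega> + successes i j t \<omega> = (\<Sum>\<tau><t. A i j \<tau> \<omega>)"
  proof (induction t)
    case (Suc t)
    then show ?case
      using U_Suc_add_R[OF ij \<omega>, of t] by (simp add: successes_def)
  qed (simp add: init successes_def)
  then show ?thesis
    unfolding swap_dev_def arrivals_def by (simp flip: of_nat_add of_nat_sum)
qed

lemma U_le_arrivals: "(i, j) \<in> pairs K \<Longrightarrow> \<omega> \<in> space M \<Longrightarrow> real (U i j t \<omega>) \<le> arrivals i j t \<omega>"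
  using U_eq_deviations[of i j \<omega> t] swap_dev_def by simp

text \<open>\<open>consumed i (Suc s) = generated i s\<close> means that node \<open>i\<close> emptied its memory in slot \<open>s\<close>.\<close>

lemma node_exhausted:
  assumes ij: "(i, j) \<in> pairs K" and unserved: "F i j s \<omega> < U i j s \<omega>"
  shows "consumed i (Suc s) \<omega> = generated i s \<omega> \<or> consumed j (Suc s) \<omega> = generated j s \<omega>"
proof -
  have spent: "consumed l (Suc s) \<omega> = generated l s \<omega>"
    if "E0 l s \<omega> - (\<Sum>k \<in> {1..K} - {l}. F l k s \<omega>) = 0" "l \<in> {1..K}" for l
  proof -
    have "E0 l (Suc s) \<omega> = C l s \<omega>"
      using E0_step[OF that(2), of s \<omega>] that(1) by simp
    then show ?thesis
      using E0_add_consumed[OF that(2), of "Suc s" \<omega>] by (simp add: generated_def)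
  qed
  have "(E0 i s \<omega> - (\<Sum>k \<in> {1..K} - {i}. F i k s \<omega>)) * (E0 j s \<omega> - (\<Sum>k \<in> {1..K} - {j}. F j k s \<omega>)) = 0"
    using od_max[OF ij, of s \<omega>] unserved F_sym[of _ j s \<omega>] by simp
  then show ?thesis
    using spent ij by (auto simp: pairs_def)
qed

lemma U_le_row_when_exhausted:
  assumes ij: "(i, j) \<in> pairs K" and \<omega>: "\<omega> \<in> space M"
    and spent: "consumed i (Suc s) \<omega> = generated i s \<omega>"
  shows "real (U i j (Suc s) \<omega>) \<le> (\<Sum>k\<in>{1..K} - {i}. arrivals i k (Suc s) \<omega>)
      - q * real (generated i s \<omega>) + (\<Sum>k\<in>{1..K} - {i}. swap_dev i k (Suc s) \<omega>)"
proof -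
  have i: "i \<in> {1..K}" and j: "j \<in> {1..K} - {i}"
    using ij by (auto simp: pairs_def)
  have "real (U i j (Suc s) \<omega>) \<le> (\<Sum>k\<in>{1..K} - {i}. real (U i k (Suc s) \<omega>))"
    by (rule member_le_sum) (use j in auto)
  also have "\<dots> = (\<Sum>k\<in>{1..K} - {i}.
      arrivals i k (Suc s) \<omega> - q * real (attempts i k (Suc s) \<omega>) + swap_dev i k (Suc s) \<omega>)"
    by (intro sum.cong refl U_eq_deviations pairs_row[OF i] \<omega>)
  also have "\<dots> = (\<Sum>k\<in>{1..K} - {i}. arrivals i k (Suc s) \<omega>)
      - q * real (\<Sum>k\<in>{1..K} - {i}. attempts i k (Suc s) \<omega>) + (\<Sum>k\<in>{1..K} - {i}. swap_dev i k (Suc s) \<omega>)"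
    by (simp add: sum.distrib sum_subtractf sum_distrib_left)
  also have "(\<Sum>k\<in>{1..K} - {i}. attempts i k (Suc s) \<omega>) = generated i s \<omega>"
    using spent unfolding consumed_def attempts_def by (simp only: sum.swap[of _ "{..<Suc s}"])
  finally show ?thesis .
qed

text \<open>Stationarity and ergodicity of the arrivals are used only through this consequence.\<close>

lemma lam_nonneg: "(a, b) \<in> pairs K \<Longrightarrow> 0 \<le> lam a b"
  using A_erg[of a b] unfolding stationary_ergodic_rate_def Let_def
  by (metis integral_nonneg_AE AE_I2 of_nat_0_le_iff)

definition slack :: real where
  "slack = eps / 3"

lemma slack_pos: "0 < slack"
  using eps by (simp add: slack_def)

text \<open>The margin \<open>eps = 3 * slack\<close> of the capacity condition pays a \<open>slack\<close> for the arrival and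
  swap deviations of every pair at node \<open>i\<close>, and one more for the generation deviation.\<close>

lemma row_capacity:
  assumes ij: "(i, j) \<in> pairs K"
  shows "(\<Sum>k\<in>{1..K} - {i}. lam i k) + 2 * real (card ({1..K} - {i})) * slack + slack \<le> q * p i"
proof -
  let ?I = "{1..K} - {i}"
  have i: "i \<in> {1..K}" and "j \<in> ?I"
    using ij by (auto simp: pairs_def)
  then have card: "1 \<le> card ?I"
    by (metis One_nat_def Suc_leI card_gt_0_iff empty_iff finite_Diff finite_atLeastAtMost)
  obtain f :: "nat \<Rightarrow> nat \<Rightarrow> real" where
    f_sym: "\<forall>(i, j) \<in> pairs K. f i j = f j i" and
    f_col: "\<forall>j \<in> {1..K}. (\<Sum>i \<in> {1..K} - {j}. f i j) \<le> p j" and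
    f_dom: "\<forall>(i, j) \<in> pairs K. lam i j + eps \<le> q * f i j"
    using capacity unfolding in_Lambda_def by blast
  have "(\<Sum>k\<in>?I. lam i k + eps) \<le> (\<Sum>k\<in>?I. q * f k i)"
    using f_sym f_dom pairs_row[OF i] by (intro sum_mono) fastforce
  also have "\<dots> \<le> q * p i"
    using f_col i q by (simp add: sum_distrib_left[symmetric])
  moreover have "eps \<le> real (card ?I) * eps"
    using card eps by (simp add: mult_le_cancel_right1)
  ultimately show ?thesis
    by (simp add: sum.distrib slack_def)
qed

definition arrival_excess :: "nat \<Rightarrow> nat \<Rightarrow> nat \<Rightarrow> 'a \<Rightarrow> real" where
  "arrival_excess a b t \<omega> = max 0 (arrivals a b t \<omega> - (lam a b + slack) * real t)"

text \<open>A bound on \<open>U i j (Suc s)\<close> once node \<open>i\<close> has emptied its memory in slot \<open>s\<close>; each of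
  its excess terms has mean bounded uniformly in \<open>s\<close>.\<close>

definition exhausted_bound :: "nat \<Rightarrow> nat \<Rightarrow> 'a \<Rightarrow> real" where
  "exhausted_bound i s \<omega> = q * p i
     + (\<Sum>k\<in>{1..K} - {i}. arrival_excess i k (Suc s) \<omega>
          + max 0 (swap_dev i k (Suc s) \<omega> - slack * real (Suc s)))
     + max 0 (q * gen_dev i s \<omega> - slack * real (Suc s))"

lemma exhausted_bound_nonneg: "i \<in> {1..K} \<Longrightarrow> 0 \<le> exhausted_bound i s \<omega>"
  unfolding exhausted_bound_def arrival_excess_def using q p_nonneg[of i]
  by (intro add_nonneg_nonneg sum_nonneg) auto

lemma U_le_exhausted_bound:
  assumes ij: "(i, j) \<in> pairs K" and \<omega>: "\<omega> \<in> space M"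
    and spent: "consumed i (Suc s) \<omega> = generated i s \<omega>"
  shows "real (U i j (Suc s) \<omega>) \<le> exhausted_bound i s \<omega>"
proof -
  let ?I = "{1..K} - {i}" and ?t = "real (Suc s)"
  let ?L = "\<Sum>k\<in>?I. lam i k" and ?n = "real (card ?I)"
  let ?Z = "\<Sum>k\<in>?I. arrival_excess i k (Suc s) \<omega>"
  let ?X = "\<Sum>k\<in>?I. max 0 (swap_dev i k (Suc s) \<omega> - slack * ?t)"
  let ?Y = "max 0 (q * gen_dev i s \<omega> - slack * ?t)"
  have arr: "(\<Sum>k\<in>?I. arrivals i k (Suc s) \<omega>) \<le> (?L + ?n * slack) * ?t + ?Z"
  proof -
    have "(\<Sum>k\<in>?I. arrivals i k (Suc s) \<omega>)
        \<le> (\<Sum>k\<in>?I. (lam i k + slack) * ?t + arrival_excess i k (Suc s) \<omega>)"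
      unfolding arrival_excess_def by (intro sum_mono) linarith
    moreover have "(\<Sum>k\<in>?I. (lam i k + slack) * ?t) = (?L + ?n * slack) * ?t"
      by (simp add: sum_distrib_right[symmetric] sum.distrib)
    ultimately show ?thesis
      by (simp add: sum.distrib)
  qed
  have dev: "(\<Sum>k\<in>?I. swap_dev i k (Suc s) \<omega>) \<le> ?n * slack * ?t + ?X"
  proof -
    have "(\<Sum>k\<in>?I. swap_dev i k (Suc s) \<omega>)
        \<le> (\<Sum>k\<in>?I. slack * ?t + max 0 (swap_dev i k (Suc s) \<omega> - slack * ?t))"
      by (intro sum_mono) linarith
    then show ?thesis
      by (simp add: sum.distrib)
  qed
  have gen: "- q * real (generated i s \<omega>) \<le> - q * p i * real s + slack * ?t + ?Y"
    unfolding gen_dev_def by (simp add: algebra_simps)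
  have cap: "(?L + 2 * ?n * slack + slack) * ?t \<le> q * p i * ?t"
    using row_capacity[OF ij] by (intro mult_right_mono) auto
  have "real (U i j (Suc s) \<omega>) \<le> (?L + ?n * slack) * ?t + ?Z - q * real (generated i s \<omega>) + ?n * slack * ?t + ?X"
    using U_le_row_when_exhausted[OF ij \<omega> spent] arr dev by linarith
  also have "\<dots> \<le> (?L + 2 * ?n * slack + slack) * ?t - q * p i * real s + ?Z + ?X + ?Y"
    using gen by (simp add: algebra_simps)
  also have "\<dots> \<le> exhausted_bound i s \<omega>"
    using cap unfolding exhausted_bound_def by (simp add: sum.distrib algebra_simps)
  finally show ?thesis .
qed

lemma U_Suc_le:
  assumes ij: "(i, j) \<in> pairs K" and \<omega>: "\<omega> \<in> space M"
  shows "real (U i j (Suc s) \<omega>) \<le> exhausted_bound i s \<omega> + exhausted_bound j s \<omega>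
     + (if U i j s \<omega> \<le> F i j s \<omega> then real (F i j s \<omega>) - real (R i j s \<omega>) else 0) + real (A i j s \<omega>)"
proof -
  have nonneg: "0 \<le> exhausted_bound i s \<omega>" "0 \<le> exhausted_bound j s \<omega>"
    using exhausted_bound_nonneg ij by (auto simp: pairs_def)
  show ?thesis
  proof (cases "U i j s \<omega> \<le> F i j s \<omega>")
    case True
    then have "real (U i j (Suc s) \<omega>) = real (F i j s \<omega>) - real (R i j s \<omega>) + real (A i j s \<omega>)"
      using U_Suc_add_R[OF ij \<omega>, of s] od_dem[OF ij, of s \<omega>] R_le_F[OF ij \<omega>, of s]
      by (simp add: of_nat_diff)
    with True nonneg show ?thesis
      by simp
  next
    case False
    then have "consumed i (Suc s) \<omega> = generated i s \<omega> \<or> consumed j (Suc s) \<omega> = generated j s \<omega>"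
      using node_exhausted[OF ij] by simp
    then have "real (U i j (Suc s) \<omega>) \<le> exhausted_bound i s \<omega> + exhausted_bound j s \<omega>"
      using U_le_exhausted_bound[OF ij \<omega>] U_le_exhausted_bound[OF pairs_sym[OF ij] \<omega>]
        U_sym[OF ij] nonneg by fastforce
    with False show ?thesis
      by simp
  qed
qed

section \<open>Exogenous randomness and measurability\<close>

definition src_sigma :: "src set \<Rightarrow> 'a measure" where
  "src_sigma J = family_sigma M seqM (sources C A S) (J \<inter> src_index K)"

text \<open>An arrival process is a single source spanning all slots, so it belongs to every
  \<open>sources_before s\<close>; only generations and swap coins are split by slot.\<close>

definition sources_before :: "nat \<Rightarrow> src set" where
  "sources_before s = {SrcA i j | i j. True} \<union> {SrcC i \<tau> | i \<tau>. \<tau> < s} \<union> {SrcS i j \<tau> k | i j \<tau> k. \<tau> < s}"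

definition sources_before_coin :: "nat \<Rightarrow> nat \<Rightarrow> nat \<Rightarrow> nat \<Rightarrow> src set" where
  "sources_before_coin a b s k = sources_before s \<union> {SrcS (min a b) (max a b) s l | l. l < k}"

lemma sources_before_mono: "t \<le> s \<Longrightarrow> sources_before t \<subseteq> sources_before s"
  unfolding sources_before_def by auto

lemma sources_before_coin_mono: "k \<le> l \<Longrightarrow> sources_before_coin a b s k \<subseteq> sources_before_coin a b s l"
  unfolding sources_before_coin_def by auto

lemma sources_before_le_coin: "sources_before s \<subseteq> sources_before_coin a b s k"
  unfolding sources_before_coin_def by auto

lemma space_src_sigma [simp]: "space (src_sigma J) = space M"
  by (simp add: src_sigma_def)

lemma SrcA_in_sources_before: "SrcA i j \<in> sources_before s"
  by (simp add: sources_before_def)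

lemma sources_measurable: "i \<in> src_index K \<Longrightarrow> sources C A S i \<in> measurable M seqM"
  using indep unfolding indep_vars_def2 by auto

lemma subalgebra_src_sigma: "subalgebra M (src_sigma J)"
  unfolding src_sigma_def by (rule subalgebra_family_sigma) (auto intro: sources_measurable)

lemma measurable_src_sigma_M: "f \<in> measurable (src_sigma J) N \<Longrightarrow> f \<in> measurable M N"
  by (rule measurable_from_subalg[OF subalgebra_src_sigma])

lemma measurable_src_sigma_mono:
  "J \<subseteq> J' \<Longrightarrow> f \<in> measurable (src_sigma J) N \<Longrightarrow> f \<in> measurable (src_sigma J') N"
  unfolding src_sigma_def by (rule measurable_family_sigma_mono) auto

lemma source_component_measurable:
  assumes "i \<in> J" "i \<in> src_index K"
  shows "(\<lambda>\<omega>. sources C A S i \<omega> n) \<in> measurable (src_sigma J) (count_space UNIV)"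
proof -
  have "sources C A S i \<in> measurable (src_sigma J) seqM"
    unfolding src_sigma_def using assms by (intro measurable_family_sigma_member sources_measurable) auto
  moreover have "(\<lambda>x. x n) \<in> measurable seqM (count_space UNIV)"
    unfolding seqM_def by (rule measurable_component_singleton) auto
  ultimately show ?thesis
    by (rule measurable_compose)
qed

lemma C_measurable:
  "i \<in> {1..K} \<Longrightarrow> SrcC i \<tau> \<in> J \<Longrightarrow> C i \<tau> \<in> measurable (src_sigma J) (count_space UNIV)"
  using source_component_measurable[of "SrcC i \<tau>" J 0] by (auto simp: src_index_def)

lemma A_measurable:
  assumes "(a, b) \<in> pairs K" "SrcA (min a b) (max a b) \<in> J"
  shows "A a b \<tau> \<in> measurable (src_sigma J) (count_space UNIV)"
proof -
  have "A (min a b) (max a b) \<tau> = A a b \<tau>"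
    using A_sym by (cases "a \<le> b") (auto simp: min_def max_def)
  moreover have "SrcA (min a b) (max a b) \<in> src_index K"
    using assms(1) by (auto simp: src_index_def pairs_def min_def max_def)
  ultimately show ?thesis
    using source_component_measurable[OF assms(2), of \<tau>] by simp
qed

lemma S_measurable:
  assumes "(a, b) \<in> pairs K" "SrcS (min a b) (max a b) \<tau> k \<in> J"
  shows "S a b \<tau> k \<in> measurable (src_sigma J) (count_space UNIV)"
proof -
  have "S (min a b) (max a b) \<tau> k = S a b \<tau> k"
    using S_sym by (cases "a \<le> b") (auto simp: min_def max_def)
  moreover have "SrcS (min a b) (max a b) \<tau> k \<in> src_index K"
    using assms(1) by (auto simp: src_index_def pairs_def min_def max_def)
  ultimately show ?thesis
    using source_component_measurable[OF assms(2), of 0] by simp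
qed

lemma F_measurable:
  assumes ab: "(a, b) \<in> pairs K" and "\<tau> \<le> s" "sources_before s \<subseteq> J"
  shows "F a b \<tau> \<in> measurable (src_sigma J) (count_space UNIV)"
proof -
  have "subalgebra (src_sigma (sources_before \<tau>)) (past M K A C S \<tau>)"
    unfolding past_def
    by (rule subalgebra_gen_sigma) (auto intro!: A_measurable S_measurable C_measurable simp: sources_before_def)
  then have "F a b \<tau> \<in> measurable (src_sigma (sources_before \<tau>)) (count_space UNIV)"
    using F_meas[OF ab] by (rule measurable_from_subalg)
  then show ?thesis
    using assms sources_before_mono by (blast intro: measurable_src_sigma_mono)
qed

lemma R_measurable:
  assumes ab: "(a, b) \<in> pairs K" and "\<tau> < s" "sources_before s \<subseteq> J"
  shows "R a b \<tau> \<in> measurable (src_sigma J) (count_space UNIV)"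
proof -
  have "R a b \<tau> = (\<lambda>\<omega>. (\<lambda>n \<omega>. \<Sum>k<n. S a b \<tau> k \<omega>) (F a b \<tau> \<omega>) \<omega>)"
    using R_def[OF ab] by auto
  moreover have [measurable]: "S a b \<tau> k \<in> measurable (src_sigma J) (count_space UNIV)" for k
    using assms by (intro S_measurable) (auto simp: sources_before_def)
  ultimately show ?thesis
    using F_measurable[OF ab _ assms(3), of \<tau>] assms(2)
    by (auto intro: measurable_compose_countable'[where I=UNIV])
qed

lemma U_measurable:
  assumes ab: "(a, b) \<in> pairs K" and "\<tau> \<le> s" "sources_before s \<subseteq> J"
  shows "U a b \<tau> \<in> measurable (src_sigma J) (count_space UNIV)"
proof -
  have "U a b \<tau> \<in> measurable (src_sigma J) (count_space UNIV)
      \<and> E a b \<tau> \<in> measurable (src_sigma J) (count_space UNIV)"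
    using assms(2)
  proof (induction \<tau>)
    case 0
    have "U a b 0 = (\<lambda>_. 0)" "E a b 0 = (\<lambda>_. 0)"
      using init by auto
    then show ?case
      by simp
  next
    case (Suc \<tau>)
    have [measurable]: "U a b \<tau> \<in> measurable (src_sigma J) (count_space UNIV)"
      "E a b \<tau> \<in> measurable (src_sigma J) (count_space UNIV)"
      "R a b \<tau> \<in> measurable (src_sigma J) (count_space UNIV)"
      "A a b \<tau> \<in> measurable (src_sigma J) (count_space UNIV)"
      using Suc R_measurable[OF ab _ assms(3)]
        A_measurable[OF ab subsetD[OF assms(3) SrcA_in_sources_before]] by auto
    have "U a b (Suc \<tau>) = (\<lambda>\<omega>. (U a b \<tau> \<omega> - E a b \<tau> \<omega> - R a b \<tau> \<omega>) + A a b \<tau> \<omega>)"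
      "E a b (Suc \<tau>) = (\<lambda>\<omega>. (E a b \<tau> \<omega> + R a b \<tau> \<omega>) - U a b \<tau> \<omega>)"
      using U_step[OF ab] E_step[OF ab] by auto
    then show ?case
      by simp
  qed
  then show ?thesis ..
qed

lemma swap_dev_measurable:
  assumes ab: "(a, b) \<in> pairs K" and "\<tau> \<le> s" "sources_before s \<subseteq> J"
  shows "swap_dev a b \<tau> \<in> borel_measurable (src_sigma J)"
proof -
  have [measurable]: "attempts a b \<tau> \<in> measurable (src_sigma J) (count_space UNIV)"
    unfolding attempts_def using assms
    by (intro measurable_sum_nat F_measurable[OF ab _ assms(3)]) simp
  have [measurable]: "successes a b \<tau> \<in> measurable (src_sigma J) (count_space UNIV)"
    unfolding successes_def using assms
    by (intro measurable_sum_nat R_measurable[OF ab _ assms(3)]) simp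
  show ?thesis
    unfolding swap_dev_def[abs_def] by measurable
qed

lemma gen_dev_measurable:
  assumes i: "i \<in> {1..K}"
  shows "gen_dev i s \<in> borel_measurable (src_sigma (sources_before s))"
proof -
  have [measurable]: "generated i s \<in> measurable (src_sigma (sources_before s)) (count_space UNIV)"
    unfolding generated_def by (intro measurable_sum_nat C_measurable[OF i]) (simp add: sources_before_def)
  show ?thesis
    unfolding gen_dev_def[abs_def] by measurable
qed

lemma arrivals_measurable:
  assumes ab: "(a, b) \<in> pairs K" and "sources_before s \<subseteq> J"
  shows "arrivals a b \<tau> \<in> borel_measurable (src_sigma J)"
proof -
  have [measurable]: "A a b t \<in> measurable (src_sigma J) (count_space UNIV)" for t
    using assms SrcA_in_sources_before by (intro A_measurable[OF ab]) auto
  show ?thesis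
    unfolding arrivals_def[abs_def] by measurable
qed

lemma pair_processes_measurable:
  assumes ab: "(a, b) \<in> pairs K"
  shows "F a b \<tau> \<in> measurable M (count_space UNIV)"
    and "S a b \<tau> k \<in> measurable M (count_space UNIV)"
    and "R a b \<tau> \<in> measurable M (count_space UNIV)"
    and "U a b \<tau> \<in> measurable M (count_space UNIV)"
    and "A a b \<tau> \<in> measurable M (count_space UNIV)"
    and "swap_dev a b \<tau> \<in> borel_measurable M"
    and "arrivals a b \<tau> \<in> borel_measurable M"
  by (rule measurable_src_sigma_M, rule F_measurable[OF ab le_refl subset_UNIV]
      S_measurable[OF ab UNIV_I] R_measurable[OF ab lessI subset_UNIV]
      U_measurable[OF ab le_refl subset_UNIV] A_measurable[OF ab UNIV_I]
      swap_dev_measurable[OF ab le_refl subset_UNIV] arrivals_measurable[OF ab subset_UNIV])+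

lemma node_processes_measurable:
  assumes i: "i \<in> {1..K}"
  shows "C i \<tau> \<in> measurable M (count_space UNIV)"
    and "gen_dev i \<tau> \<in> borel_measurable M"
  by (rule measurable_src_sigma_M, rule C_measurable[OF i UNIV_I] gen_dev_measurable[OF i])+

section \<open>Second moments of the swap and generation deviations\<close>

lemma integral_mult_centred_indep_source:
  fixes W :: "'a \<Rightarrow> real"
  assumes disj: "J \<inter> J' = {}"
    and W: "W \<in> borel_measurable (src_sigma J)" "\<And>\<omega>. \<omega> \<in> space M \<Longrightarrow> \<bar>W \<omega>\<bar> \<le> B"
    and Z: "Z \<in> measurable (src_sigma J') (count_space UNIV)" "\<And>\<omega>. \<omega> \<in> space M \<Longrightarrow> Z \<omega> \<le> 1"
  shows "(\<integral>\<omega>. W \<omega> * (prob {\<omega> \<in> space M. Z \<omega> = 1} - real (Z \<omega>)) \<partial>M) = 0"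
proof -
  have ZM [measurable]: "Z \<in> measurable M (count_space UNIV)"
    using measurable_src_sigma_M[OF Z(1)] .
  have WM [measurable]: "W \<in> borel_measurable M"
    using measurable_src_sigma_M[OF W(1)] .
  have int_W: "integrable M W"
    using integrable_bounded[OF WM W(2)] .
  have "\<bar>W \<omega> * real (Z \<omega>)\<bar> \<le> B" if "\<omega> \<in> space M" for \<omega>
    using W(2)[OF that] Z(2)[OF that] by (cases "Z \<omega>") (auto simp: abs_mult)
  then have int_WZ: "integrable M (\<lambda>\<omega>. W \<omega> * real (Z \<omega>))"
    by (intro integrable_bounded) auto
  have "integrable M (\<lambda>\<omega>. real (Z \<omega>))"
    by (rule integrable_bounded[where B=1]) (use Z(2) in auto)
  moreover have "(\<lambda>\<omega>. real (Z \<omega>)) \<in> borel_measurable (src_sigma J')"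
    using Z(1) by measurable
  ultimately have "(\<integral>\<omega>. W \<omega> * real (Z \<omega>) \<partial>M) = (\<integral>\<omega>. W \<omega> \<partial>M) * (\<integral>\<omega>. real (Z \<omega>) \<partial>M)"
    using W(1) disj int_W unfolding src_sigma_def
    by (intro integral_mult_family_sigma_disjoint[OF indep]) auto
  then show ?thesis
    using integral_zero_one_nat[OF ZM Z(2)] int_W int_WZ by (simp add: right_diff_distrib)
qed

lemma integral_mult_centred_coin:
  assumes ab: "(a, b) \<in> pairs K"
    and W: "W \<in> borel_measurable (src_sigma (sources_before_coin a b s k))"
      "\<And>\<omega>. \<omega> \<in> space M \<Longrightarrow> \<bar>W \<omega>\<bar> \<le> B"
  shows "(\<integral>\<omega>. W \<omega> * (q - real (S a b s k \<omega>)) \<partial>M) = 0"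
proof -
  have disj: "sources_before_coin a b s k \<inter> {SrcS (min a b) (max a b) s k} = {}"
    unfolding sources_before_coin_def sources_before_def by auto
  have "S a b s k \<in> measurable (src_sigma {SrcS (min a b) (max a b) s k}) (count_space UNIV)"
    by (rule S_measurable[OF ab]) simp
  from integral_mult_centred_indep_source[OF disj W this] show ?thesis
    using S_bern[OF ab, of s k] by simp
qed

lemma integral_mult_centred_generation:
  assumes i: "i \<in> {1..K}"
    and W: "W \<in> borel_measurable (src_sigma (sources_before s))" "\<And>\<omega>. \<omega> \<in> space M \<Longrightarrow> \<bar>W \<omega>\<bar> \<le> B"
  shows "(\<integral>\<omega>. W \<omega> * (p i - real (C i s \<omega>)) \<partial>M) = 0"
proof -
  have disj: "sources_before s \<inter> {SrcC i s} = {}"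
    unfolding sources_before_def by auto
  have "C i s \<in> measurable (src_sigma {SrcC i s}) (count_space UNIV)"
    by (rule C_measurable[OF i]) simp
  from integral_mult_centred_indep_source[OF disj W this] show ?thesis
    using C_bern[OF i, of s] by simp
qed

lemma integral_gen_dev_square: "i \<in> {1..K} \<Longrightarrow> (\<integral>\<omega>. (gen_dev i t \<omega>)\<^sup>2 \<partial>M) \<le> real t"
proof (induction t)
  case 0
  then show ?case
    by (simp add: gen_dev_def generated_def)
next
  case (Suc t)
  then have i: "i \<in> {1..K}" by simp
  define D where "D \<omega> = p i - real (C i t \<omega>)" for \<omega>
  note [measurable] = node_processes_measurable[OF i]
  have D_bd: "\<bar>D \<omega>\<bar> \<le> 1" if "\<omega> \<in> space M" for \<omega>
    using C_bern[OF i, of t] that p_le_1[OF i] p_nonneg[OF i] by (cases "C i t \<omega>") (auto simp: D_def)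
  have orth: "(\<integral>\<omega>. gen_dev i t \<omega> * D \<omega> \<partial>M) = 0"
    unfolding D_def by (rule integral_mult_centred_generation[OF i gen_dev_measurable[OF i] gen_dev_bound[OF i]])
  have "gen_dev i (Suc t) \<omega> = gen_dev i t \<omega> + D \<omega>" for \<omega>
    by (simp add: gen_dev_def generated_def D_def algebra_simps)
  then have "(\<integral>\<omega>. (gen_dev i (Suc t) \<omega>)\<^sup>2 \<partial>M) = (\<integral>\<omega>. (gen_dev i t \<omega>)\<^sup>2 \<partial>M) + (\<integral>\<omega>. (D \<omega>)\<^sup>2 \<partial>M)"
    using integral_square_add_orthogonal[OF _ _ gen_dev_bound[OF i] D_bd orth] by (simp add: D_def)
  also have "(\<integral>\<omega>. (D \<omega>)\<^sup>2 \<partial>M) \<le> (\<integral>\<omega>. 1 \<partial>M)"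
    by (rule integral_mono) (use D_bd in \<open>auto simp: abs_square_le_1 D_def intro!: integrable_bounded[where B=1]\<close>)
  finally show ?case
    using Suc.IH[OF i] by (simp add: prob_space)
qed

text \<open>\<open>swap_dev a b (Suc \<tau>)\<close> arises from \<open>swap_dev a b \<tau>\<close> by adding the centred coins of slot
  \<open>\<tau>\<close> one at a time; \<open>coin_partial a b \<tau> k\<close> is the value after the first \<open>k\<close> of them.\<close>

definition coin_partial :: "nat \<Rightarrow> nat \<Rightarrow> nat \<Rightarrow> nat \<Rightarrow> 'a \<Rightarrow> real" where
  "coin_partial a b \<tau> k \<omega> =
     swap_dev a b \<tau> \<omega> + (\<Sum>l<k. if l < F a b \<tau> \<omega> then q - real (S a b \<tau> l \<omega>) else 0)"

lemma coin_partial_Suc: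
  "coin_partial a b \<tau> (Suc k) \<omega>
     = coin_partial a b \<tau> k \<omega> + (if k < F a b \<tau> \<omega> then q - real (S a b \<tau> k \<omega>) else 0)"
  by (simp add: coin_partial_def)

lemma coin_partial_measurable:
  assumes ab: "(a, b) \<in> pairs K"
  shows "coin_partial a b \<tau> k \<in> borel_measurable (src_sigma (sources_before_coin a b \<tau> k))"
proof (induction k)
  case 0
  then show ?case
    using swap_dev_measurable[OF ab le_refl sources_before_le_coin]
    by (simp add: coin_partial_def[abs_def])
next
  case (Suc k)
  have [measurable]: "coin_partial a b \<tau> k \<in> borel_measurable (src_sigma (sources_before_coin a b \<tau> (Suc k)))"
    using Suc by (rule measurable_src_sigma_mono[rotated]) (simp add: sources_before_coin_mono)
  have [measurable]: "F a b \<tau> \<in> measurable (src_sigma (sources_before_coin a b \<tau> (Suc k))) (count_space UNIV)"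
    by (rule F_measurable[OF ab le_refl sources_before_le_coin])
  have [measurable]: "S a b \<tau> k \<in> measurable (src_sigma (sources_before_coin a b \<tau> (Suc k))) (count_space UNIV)"
    by (rule S_measurable[OF ab]) (auto simp: sources_before_coin_def)
  show ?case
    unfolding coin_partial_Suc[abs_def] by measurable
qed

lemma centred_coin_bound:
  "(a, b) \<in> pairs K \<Longrightarrow> \<omega> \<in> space M \<Longrightarrow> \<bar>q - real (S a b \<tau> l \<omega>)\<bar> \<le> 1"
  using S_bern[of a b \<tau> l] q by (cases "S a b \<tau> l \<omega>") auto

lemma coin_partial_bound:
  assumes ab: "(a, b) \<in> pairs K" and \<omega>: "\<omega> \<in> space M"
  shows "\<bar>coin_partial a b \<tau> k \<omega>\<bar> \<le> real \<tau> + real k"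
proof -
  have "\<bar>\<Sum>l<k. if l < F a b \<tau> \<omega> then q - real (S a b \<tau> l \<omega>) else 0\<bar> \<le> (\<Sum>l<k. 1)"
    by (intro order.trans[OF sum_abs] sum_mono) (use centred_coin_bound[OF ab \<omega>] in auto)
  then show ?thesis
    unfolding coin_partial_def using swap_dev_bound[OF ab \<omega>, of \<tau>] by simp
qed

lemma integral_coin_partial_mult_next_coin:
  assumes ab: "(a, b) \<in> pairs K"
  shows "(\<integral>\<omega>. coin_partial a b \<tau> k \<omega> * (if k < F a b \<tau> \<omega> then q - real (S a b \<tau> k \<omega>) else 0) \<partial>M) = 0"
proof -
  define W where "W \<omega> = (if k < F a b \<tau> \<omega> then coin_partial a b \<tau> k \<omega> else 0)" for \<omega>
  have W_meas: "W \<in> borel_measurable (src_sigma (sources_before_coin a b \<tau> k))"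
  proof -
    note [measurable] = coin_partial_measurable[OF ab]
      F_measurable[OF ab le_refl sources_before_le_coin]
    show ?thesis
      unfolding W_def[abs_def] by measurable
  qed
  have "(\<integral>\<omega>. coin_partial a b \<tau> k \<omega> * (if k < F a b \<tau> \<omega> then q - real (S a b \<tau> k \<omega>) else 0) \<partial>M)
      = (\<integral>\<omega>. W \<omega> * (q - real (S a b \<tau> k \<omega>)) \<partial>M)"
    by (rule Bochner_Integration.integral_cong) (simp_all add: W_def)
  also have "\<dots> = 0"
    using coin_partial_bound[OF ab]
    by (intro integral_mult_centred_coin[OF ab W_meas, where B="real \<tau> + real k"]) (simp add: W_def)
  finally show ?thesis .
qed

lemma integral_coin_partial_square:
  assumes ab: "(a, b) \<in> pairs K"
  shows "(\<integral>\<omega>. (coin_partial a b \<tau> k \<omega>)\<^sup>2 \<partial>M)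
      \<le> (\<integral>\<omega>. (swap_dev a b \<tau> \<omega>)\<^sup>2 \<partial>M) + (\<integral>\<omega>. real (min k (F a b \<tau> \<omega>)) \<partial>M)"
proof (induction k)
  case 0
  then show ?case
    by (simp add: coin_partial_def)
next
  case (Suc k)
  define D where "D \<omega> = (if k < F a b \<tau> \<omega> then q - real (S a b \<tau> k \<omega>) else 0)" for \<omega>
  note [measurable] = pair_processes_measurable[OF ab]
    measurable_src_sigma_M[OF coin_partial_measurable[OF ab]]
  have D_bd: "\<bar>D \<omega>\<bar> \<le> 1" if "\<omega> \<in> space M" for \<omega>
    unfolding D_def using centred_coin_bound[OF ab that] by simp
  have orth: "(\<integral>\<omega>. coin_partial a b \<tau> k \<omega> * D \<omega> \<partial>M) = 0"
    unfolding D_def by (rule integral_coin_partial_mult_next_coin[OF ab])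
  have min_int: "integrable M (\<lambda>\<omega>. real (min n (F a b \<tau> \<omega>)))" for n
    by (rule integrable_bounded[where B="real n"]) auto
  have "(\<integral>\<omega>. (coin_partial a b \<tau> (Suc k) \<omega>)\<^sup>2 \<partial>M)
      = (\<integral>\<omega>. (coin_partial a b \<tau> k \<omega>)\<^sup>2 \<partial>M) + (\<integral>\<omega>. (D \<omega>)\<^sup>2 \<partial>M)"
    using integral_square_add_orthogonal[OF _ _ coin_partial_bound[OF ab] D_bd orth]
    by (simp add: coin_partial_Suc D_def)
  also have "(\<integral>\<omega>. (D \<omega>)\<^sup>2 \<partial>M)
      \<le> (\<integral>\<omega>. real (min (Suc k) (F a b \<tau> \<omega>)) - real (min k (F a b \<tau> \<omega>)) \<partial>M)"
  proof (rule integral_mono)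
    show "integrable M (\<lambda>\<omega>. (D \<omega>)\<^sup>2)"
      by (rule integrable_bounded[where B=1]) (use D_bd in \<open>auto simp: abs_square_le_1 D_def\<close>)
    fix \<omega> assume "\<omega> \<in> space M"
    then show "(D \<omega>)\<^sup>2 \<le> real (min (Suc k) (F a b \<tau> \<omega>)) - real (min k (F a b \<tau> \<omega>))"
      using D_bd[of \<omega>] by (cases "k < F a b \<tau> \<omega>") (auto simp: D_def abs_square_le_1)
  qed (use min_int in simp)
  also have "\<dots> = (\<integral>\<omega>. real (min (Suc k) (F a b \<tau> \<omega>)) \<partial>M) - (\<integral>\<omega>. real (min k (F a b \<tau> \<omega>)) \<partial>M)"
    using min_int by simp
  finally show ?case
    using Suc.IH by simp
qed

lemma swap_dev_Suc:
  assumes ab: "(a, b) \<in> pairs K" and \<omega>: "\<omega> \<in> space M"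
  shows "swap_dev a b (Suc \<tau>) \<omega> = coin_partial a b \<tau> \<tau> \<omega>"
proof -
  have "q * real (F a b \<tau> \<omega>) - real (R a b \<tau> \<omega>) = (\<Sum>l<F a b \<tau> \<omega>. q - real (S a b \<tau> l \<omega>))"
    using R_def[OF ab] by (simp add: sum_subtractf)
  also have "\<dots> = (\<Sum>l<\<tau>. if l < F a b \<tau> \<omega> then q - real (S a b \<tau> l \<omega>) else 0)"
    using sum_lessThan_if_less[OF F_le[OF ab \<omega>, of \<tau>], of "\<lambda>l. q - real (S a b \<tau> l \<omega>)"] by simp
  finally show ?thesis
    by (simp add: coin_partial_def swap_dev_def attempts_def successes_def algebra_simps)
qed

lemma integral_swap_dev_square:
  assumes ab: "(a, b) \<in> pairs K"
  shows "(\<integral>\<omega>. (swap_dev a b t \<omega>)\<^sup>2 \<partial>M) \<le> real t"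
proof -
  note [measurable] = pair_processes_measurable[OF ab]
  have int_F: "integrable M (\<lambda>\<omega>. real (F a b \<tau> \<omega>))" for \<tau>
    by (rule integrable_bounded[where B="real \<tau>"]) (auto simp: F_le[OF ab])
  have step: "(\<integral>\<omega>. (swap_dev a b (Suc \<tau>) \<omega>)\<^sup>2 \<partial>M)
      \<le> (\<integral>\<omega>. (swap_dev a b \<tau> \<omega>)\<^sup>2 \<partial>M) + (\<integral>\<omega>. real (F a b \<tau> \<omega>) \<partial>M)" for \<tau>
  proof -
    have "(\<integral>\<omega>. (swap_dev a b (Suc \<tau>) \<omega>)\<^sup>2 \<partial>M) = (\<integral>\<omega>. (coin_partial a b \<tau> \<tau> \<omega>)\<^sup>2 \<partial>M)"
      by (rule Bochner_Integration.integral_cong[OF refl]) (simp add: swap_dev_Suc[OF ab])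
    moreover have "(\<integral>\<omega>. real (min \<tau> (F a b \<tau> \<omega>)) \<partial>M) = (\<integral>\<omega>. real (F a b \<tau> \<omega>) \<partial>M)"
      by (rule Bochner_Integration.integral_cong[OF refl]) (simp add: F_le[OF ab] min_absorb2)
    ultimately show ?thesis
      using integral_coin_partial_square[OF ab, of \<tau> \<tau>] by simp
  qed
  have "(\<integral>\<omega>. (swap_dev a b t \<omega>)\<^sup>2 \<partial>M) \<le> (\<Sum>\<tau><t. \<integral>\<omega>. real (F a b \<tau> \<omega>) \<partial>M)"
  proof (induction t)
    case (Suc t)
    then show ?case
      using step[of t] by simp
  qed (simp add: swap_dev_def attempts_def successes_def)
  also have "\<dots> = (\<integral>\<omega>. real (attempts a b t \<omega>) \<partial>M)"
    using int_F by (simp add: attempts_def)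
  also have "\<dots> \<le> real t"
  proof (rule integral_le_const)
    show "integrable M (\<lambda>\<omega>. real (attempts a b t \<omega>))"
      using int_F by (simp add: attempts_def)
    show "AE \<omega> in M. real (attempts a b t \<omega>) \<le> real t"
      using attempts_le[OF ab] by (intro AE_I2) simp
  qed
  finally show ?thesis .
qed

section \<open>Mean drift of the pending requests\<close>

definition arrival_tail_bounded :: "real \<Rightarrow> bool" where
  "arrival_tail_bounded c \<longleftrightarrow> (\<forall>t \<ge> 1. \<forall>(i, j) \<in> pairs K.
     (\<integral>\<^sup>+ \<omega>. indicator {\<omega> \<in> space M. \<exists>(i', j') \<in> pairs K.
              \<bar>(\<Sum>\<tau> < t. real (A i' j' \<tau> \<omega>)) / real t - lam i' j'\<bar> > slack} \<omega>
           * ennreal (\<Sum>\<tau> < t. real (A i j \<tau> \<omega>)) \<partial>M) \<le> ennreal c)"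

definition arrival_const :: real where
  "arrival_const = (SOME c. 0 \<le> c \<and> arrival_tail_bounded c)"

lemma arrival_const: "0 \<le> arrival_const" "arrival_tail_bounded arrival_const"
proof -
  obtain c where c: "arrival_tail_bounded c"
    using arrival_tails[OF slack_pos] unfolding arrival_tail_bounded_def by blast
  have "arrival_tail_bounded (max c 0)"
    using c unfolding arrival_tail_bounded_def by (fastforce intro: order.trans ennreal_leI)
  then have "\<exists>c. 0 \<le> c \<and> arrival_tail_bounded c"
    by (intro exI[of _ "max c 0"]) simp
  then show "0 \<le> arrival_const" "arrival_tail_bounded arrival_const"
    unfolding arrival_const_def by (metis (mono_tags, lifting) someI_ex)+
qed

text \<open>This is where Assumption 1 enters, with \<open>eps' = slack\<close>.\<close>

lemma arrival_excess_integral: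
  assumes ab: "(a, b) \<in> pairs K" and t: "t \<ge> 1"
  shows "integrable M (arrival_excess a b t)" and "(\<integral>\<omega>. arrival_excess a b t \<omega> \<partial>M) \<le> arrival_const"
proof -
  let ?B = "{\<omega> \<in> space M. \<exists>(i', j') \<in> pairs K.
               \<bar>(\<Sum>\<tau> < t. real (A i' j' \<tau> \<omega>)) / real t - lam i' j'\<bar> > slack}"
  note [measurable] = pair_processes_measurable[OF ab]
  have nonneg: "0 \<le> arrival_excess a b t \<omega>" for \<omega>
    by (simp add: arrival_excess_def)
  have le: "ennreal (arrival_excess a b t \<omega>) \<le> indicator ?B \<omega> * ennreal (\<Sum>\<tau> < t. real (A a b \<tau> \<omega>))"
    if \<omega>: "\<omega> \<in> space M" for \<omega>
  proof (cases "arrival_excess a b t \<omega> = 0")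
    case False
    then have gt: "arrivals a b t \<omega> > (lam a b + slack) * real t"
      unfolding arrival_excess_def by (auto simp: max_def split: if_splits)
    then have "arrivals a b t \<omega> / real t > lam a b + slack"
      using t by (simp add: field_simps)
    then have "\<bar>(\<Sum>\<tau> < t. real (A a b \<tau> \<omega>)) / real t - lam a b\<bar> > slack"
      unfolding arrivals_def by linarith
    then have "\<omega> \<in> ?B"
      using \<omega> ab by blast
    moreover have "arrival_excess a b t \<omega> \<le> arrivals a b t \<omega>"
      using lam_nonneg[OF ab] slack_pos gt unfolding arrival_excess_def by (simp add: max_def)
    ultimately show ?thesis
      unfolding arrivals_def by (simp add: ennreal_leI)
  qed simp
  have "(\<integral>\<^sup>+\<omega>. ennreal (arrival_excess a b t \<omega>) \<partial>M)
      \<le> (\<integral>\<^sup>+\<omega>. indicator ?B \<omega> * ennreal (\<Sum>\<tau> < t. real (A a b \<tau> \<omega>)) \<partial>M)"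
    by (rule nn_integral_mono) (rule le)
  also have "\<dots> \<le> ennreal arrival_const"
    using arrival_const(2) t ab unfolding arrival_tail_bounded_def by blast
  finally have nn: "(\<integral>\<^sup>+\<omega>. ennreal (arrival_excess a b t \<omega>) \<partial>M) \<le> ennreal arrival_const" .
  show int: "integrable M (arrival_excess a b t)"
    using nn nonneg by (intro integrableI_nonneg) (auto simp: arrival_excess_def[abs_def] order_le_less_trans)
  have "(\<integral>\<omega>. arrival_excess a b t \<omega> \<partial>M) = enn2real (\<integral>\<^sup>+\<omega>. ennreal (arrival_excess a b t \<omega>) \<partial>M)"
    by (rule integral_eq_nn_integral) (auto simp: nonneg arrival_excess_def[abs_def])
  also have "\<dots> \<le> arrival_const"
    using nn arrival_const(1) by (simp add: enn2real_leI)
  finally show "(\<integral>\<omega>. arrival_excess a b t \<omega> \<partial>M) \<le> arrival_const" .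
qed

lemma arrivals_nonneg: "0 \<le> arrivals a b t \<omega>"
  by (simp add: arrivals_def sum_nonneg)

lemma arrivals_integral:
  assumes ab: "(a, b) \<in> pairs K" and t: "t \<ge> 1"
  shows "integrable M (arrivals a b t)"
    and "(\<integral>\<omega>. arrivals a b t \<omega> \<partial>M) \<le> arrival_const + (lam a b + slack) * real t"
proof -
  note [measurable] = pair_processes_measurable[OF ab]
  have le: "arrivals a b t \<omega> \<le> arrival_excess a b t \<omega> + (lam a b + slack) * real t" for \<omega>
    unfolding arrival_excess_def by simp
  have int_bound: "integrable M (\<lambda>\<omega>. arrival_excess a b t \<omega> + (lam a b + slack) * real t)"
    using arrival_excess_integral(1)[OF ab t] by simp
  show int: "integrable M (arrivals a b t)"
    by (rule Bochner_Integration.integrable_bound[OF int_bound])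
      (use le arrivals_nonneg in \<open>auto intro!: AE_I2 intro: order.trans[OF _ abs_ge_self]\<close>)
  have "(\<integral>\<omega>. arrivals a b t \<omega> \<partial>M) \<le> (\<integral>\<omega>. arrival_excess a b t \<omega> + (lam a b + slack) * real t \<partial>M)"
    by (rule integral_mono[OF int int_bound le])
  also have "\<dots> = (\<integral>\<omega>. arrival_excess a b t \<omega> \<partial>M) + (lam a b + slack) * real t"
    using arrival_excess_integral(1)[OF ab t] by (simp add: prob_space)
  finally show "(\<integral>\<omega>. arrivals a b t \<omega> \<partial>M) \<le> arrival_const + (lam a b + slack) * real t"
    using arrival_excess_integral(2)[OF ab t] by simp
qed

lemma A_integrable:
  assumes ab: "(a, b) \<in> pairs K"
  shows "integrable M (\<lambda>\<omega>. real (A a b s \<omega>))"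
proof (rule Bochner_Integration.integrable_bound[OF arrivals_integral(1)[OF ab, of "Suc s"]])
  show "(\<lambda>\<omega>. real (A a b s \<omega>)) \<in> borel_measurable M"
    using pair_processes_measurable(5)[OF ab] by measurable
  show "AE \<omega> in M. norm (real (A a b s \<omega>)) \<le> norm (arrivals a b (Suc s) \<omega>)"
    using arrivals_nonneg[of a b s] by (intro AE_I2) (simp add: arrivals_def)
qed simp

lemma U_integrable:
  assumes ab: "(a, b) \<in> pairs K"
  shows "integrable M (\<lambda>\<omega>. real (U a b t \<omega>))"
proof (cases t)
  case 0
  then show ?thesis
    using init by simp
next
  case (Suc s)
  show ?thesis
  proof (rule Bochner_Integration.integrable_bound[OF arrivals_integral(1)[OF ab, of t]])
    show "(\<lambda>\<omega>. real (U a b t \<omega>)) \<in> borel_measurable M"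
      using pair_processes_measurable(4)[OF ab] by measurable
    show "AE \<omega> in M. norm (real (U a b t \<omega>)) \<le> norm (arrivals a b t \<omega>)"
      using U_le_arrivals[OF ab] arrivals_nonneg[of a b t] by (intro AE_I2) simp
  qed (use Suc in simp)
qed

definition drain_const :: real where
  "drain_const = q + real K * (arrival_const + 1 / (4 * slack)) + 1 / (4 * slack)"

lemma swap_excess_integral:
  assumes ab: "(a, b) \<in> pairs K" and t: "0 < t"
  shows "integrable M (\<lambda>\<omega>. max 0 (swap_dev a b t \<omega> - slack * real t))"
    and "(\<integral>\<omega>. max 0 (swap_dev a b t \<omega> - slack * real t) \<partial>M) \<le> 1 / (4 * slack)"
  using integral_pos_part_le_second_moment[OF pair_processes_measurable(6)[OF ab]
      swap_dev_bound[OF ab] integral_swap_dev_square[OF ab] slack_pos] t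
  by simp_all

lemma gen_excess_integral:
  assumes i: "i \<in> {1..K}"
  shows "integrable M (\<lambda>\<omega>. max 0 (q * gen_dev i s \<omega> - slack * real (Suc s)))"
    and "(\<integral>\<omega>. max 0 (q * gen_dev i s \<omega> - slack * real (Suc s)) \<partial>M) \<le> 1 / (4 * slack)"
proof -
  have "(\<integral>\<omega>. (q * gen_dev i s \<omega>)\<^sup>2 \<partial>M) = q\<^sup>2 * (\<integral>\<omega>. (gen_dev i s \<omega>)\<^sup>2 \<partial>M)"
    by (simp add: power_mult_distrib)
  also have "\<dots> \<le> 1 * real s"
    using q integral_gen_dev_square[OF i, of s]
    by (intro mult_mono) (auto simp: power_le_one integral_nonneg_AE)
  finally have "(\<integral>\<omega>. (q * gen_dev i s \<omega>)\<^sup>2 \<partial>M) \<le> real (Suc s)"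
    by simp
  moreover have "\<bar>q * gen_dev i s \<omega>\<bar> \<le> real s" if "\<omega> \<in> space M" for \<omega>
    using mult_mono[OF _ gen_dev_bound[OF i that, of s], of "\<bar>q\<bar>" 1] q by (simp add: abs_mult)
  ultimately show "integrable M (\<lambda>\<omega>. max 0 (q * gen_dev i s \<omega> - slack * real (Suc s)))"
    and "(\<integral>\<omega>. max 0 (q * gen_dev i s \<omega> - slack * real (Suc s)) \<partial>M) \<le> 1 / (4 * slack)"
    using node_processes_measurable(2)[OF i, of s]
    by (auto intro!: integral_pos_part_le_second_moment slack_pos)
qed

lemma exhausted_bound_integral:
  assumes i: "i \<in> {1..K}"
  shows "integrable M (exhausted_bound i s)" and "(\<integral>\<omega>. exhausted_bound i s \<omega> \<partial>M) \<le> drain_const"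
proof -
  let ?I = "{1..K} - {i}" and ?t = "real (Suc s)"
  define g where "g k \<omega> = arrival_excess i k (Suc s) \<omega> + max 0 (swap_dev i k (Suc s) \<omega> - slack * ?t)" for k \<omega>
  define h where "h \<omega> = max 0 (q * gen_dev i s \<omega> - slack * ?t)" for \<omega>
  have g: "integrable M (g k) \<and> (\<integral>\<omega>. g k \<omega> \<partial>M) \<le> arrival_const + 1 / (4 * slack)" if k: "k \<in> ?I" for k
  proof -
    have ik: "(i, k) \<in> pairs K"
      using pairs_row[OF i k] .
    show ?thesis
      using arrival_excess_integral[OF ik, of "Suc s"] swap_excess_integral[OF ik, of "Suc s"]
      unfolding g_def by simp
  qed
  have h: "integrable M h" "(\<integral>\<omega>. h \<omega> \<partial>M) \<le> 1 / (4 * slack)"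
    unfolding h_def by (rule gen_excess_integral[OF i])+
  have eq: "exhausted_bound i s = (\<lambda>\<omega>. q * p i + (\<Sum>k\<in>?I. g k \<omega>) + h \<omega>)"
    unfolding exhausted_bound_def g_def h_def by auto
  have int_sum: "integrable M (\<lambda>\<omega>. \<Sum>k\<in>?I. g k \<omega>)"
    using g by (intro Bochner_Integration.integrable_sum) auto
  show "integrable M (exhausted_bound i s)"
    unfolding eq using int_sum h by simp
  have "(\<integral>\<omega>. exhausted_bound i s \<omega> \<partial>M) = q * p i + (\<Sum>k\<in>?I. \<integral>\<omega>. g k \<omega> \<partial>M) + (\<integral>\<omega>. h \<omega> \<partial>M)"
    unfolding eq using g h int_sum by (simp add: prob_space Bochner_Integration.integral_sum)
  also have "\<dots> \<le> q + real K * (arrival_const + 1 / (4 * slack)) + 1 / (4 * slack)"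
  proof -
    have "q * p i \<le> q"
      using q p_le_1[OF i] by (simp add: mult_left_le)
    moreover have "(\<Sum>k\<in>?I. \<integral>\<omega>. g k \<omega> \<partial>M) \<le> real (card ?I) * (arrival_const + 1 / (4 * slack))"
      using sum_mono[of ?I "\<lambda>k. \<integral>\<omega>. g k \<omega> \<partial>M" "\<lambda>_. arrival_const + 1 / (4 * slack)"] g by simp
    moreover have "real (card ?I) * (arrival_const + 1 / (4 * slack)) \<le> real K * (arrival_const + 1 / (4 * slack))"
      using card_mono[of "{1..K}" ?I] arrival_const(1) slack_pos by (intro mult_right_mono) auto
    ultimately show ?thesis
      using h by linarith
  qed
  finally show "(\<integral>\<omega>. exhausted_bound i s \<omega> \<partial>M) \<le> drain_const"
    unfolding drain_const_def .
qed

text \<open>When every pending request is attempted, each attempt fails independently with probability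
  \<open>1 - q\<close>; the coins are split off as centred terms, one per potential attempt.\<close>

lemma integral_attempted_coin:
  fixes i j s k :: nat
  assumes ij: "(i, j) \<in> pairs K"
  defines "D \<equiv> \<lambda>\<omega>. if U i j s \<omega> \<le> F i j s \<omega> \<and> k < F i j s \<omega> then q - real (S i j s k \<omega>) else 0"
  shows "integrable M D" and "(\<integral>\<omega>. D \<omega> \<partial>M) = 0"
proof -
  define W where "W \<omega> = (if U i j s \<omega> \<le> F i j s \<omega> \<and> k < F i j s \<omega> then 1 else 0 :: real)" for \<omega>
  have W_meas: "W \<in> borel_measurable (src_sigma (sources_before_coin i j s k))"
  proof -
    note [measurable] = U_measurable[OF ij le_refl sources_before_le_coin]
      F_measurable[OF ij le_refl sources_before_le_coin]
    show ?thesis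
      unfolding W_def[abs_def] by measurable
  qed
  have D_eq: "D = (\<lambda>\<omega>. W \<omega> * (q - real (S i j s k \<omega>)))"
    by (auto simp: D_def W_def)
  show "integrable M D"
    unfolding D_eq
  proof (rule integrable_bounded[where B=1])
    show "(\<lambda>\<omega>. W \<omega> * (q - real (S i j s k \<omega>))) \<in> borel_measurable M"
      using measurable_src_sigma_M[OF W_meas] pair_processes_measurable(2)[OF ij] by measurable
  qed (use centred_coin_bound[OF ij] in \<open>auto simp: W_def\<close>)
  show "(\<integral>\<omega>. D \<omega> \<partial>M) = 0"
    unfolding D_eq by (rule integral_mult_centred_coin[OF ij W_meas, where B=1]) (simp add: W_def)
qed

lemma integral_attempted_residual:
  fixes i j s :: nat
  assumes ij: "(i, j) \<in> pairs K"
  defines "H \<equiv> \<lambda>\<omega>. if U i j s \<omega> \<le> F i j s \<omega> then real (F i j s \<omega>) - real (R i j s \<omega>) else 0"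
  shows "integrable M H" and "(\<integral>\<omega>. H \<omega> \<partial>M) \<le> (1 - q) * (\<integral>\<omega>. real (U i j s \<omega>) \<partial>M)"
proof -
  define D where "D k \<omega> = (if U i j s \<omega> \<le> F i j s \<omega> \<and> k < F i j s \<omega> then q - real (S i j s k \<omega>) else 0)"
    for k \<omega>
  define G where "G \<omega> = (if U i j s \<omega> \<le> F i j s \<omega> then real (F i j s \<omega>) else 0)" for \<omega>
  note [measurable] = pair_processes_measurable[OF ij]
  note coin = integral_attempted_coin[OF ij, of s, folded D_def]
  have int_G: "integrable M G"
    by (rule integrable_bounded[where B="real s"]) (auto simp: G_def[abs_def] F_le[OF ij])
  have H_eq: "H \<omega> = (\<Sum>k<s. D k \<omega>) + (1 - q) * G \<omega>" if \<omega>: "\<omega> \<in> space M" for \<omega>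
  proof (cases "U i j s \<omega> \<le> F i j s \<omega>")
    case True
    have "(\<Sum>k<s. D k \<omega>) = (\<Sum>k<s. if k < F i j s \<omega> then q - real (S i j s k \<omega>) else 0)"
      using True by (simp add: D_def)
    also have "\<dots> = (\<Sum>k<F i j s \<omega>. q - real (S i j s k \<omega>))"
      by (rule sum_lessThan_if_less[OF F_le[OF ij \<omega>]])
    also have "\<dots> = q * real (F i j s \<omega>) - real (R i j s \<omega>)"
      using R_def[OF ij] by (simp add: sum_subtractf)
    finally show ?thesis
      using True by (simp add: H_def G_def algebra_simps)
  qed (simp add: H_def G_def D_def)
  have "integrable M H \<longleftrightarrow> integrable M (\<lambda>\<omega>. (\<Sum>k<s. D k \<omega>) + (1 - q) * G \<omega>)"
    by (rule Bochner_Integration.integrable_cong) (simp_all add: H_eq)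
  then show "integrable M H"
    using coin(1) int_G by simp
  have "(\<integral>\<omega>. H \<omega> \<partial>M) = (\<integral>\<omega>. (\<Sum>k<s. D k \<omega>) + (1 - q) * G \<omega> \<partial>M)"
    by (rule Bochner_Integration.integral_cong) (simp_all add: H_eq)
  also have "\<dots> = (1 - q) * (\<integral>\<omega>. G \<omega> \<partial>M)"
    using coin int_G by (simp add: Bochner_Integration.integral_sum)
  also have "\<dots> \<le> (1 - q) * (\<integral>\<omega>. real (U i j s \<omega>) \<partial>M)"
    using q od_dem[OF ij] by (intro mult_left_mono integral_mono int_G U_integrable[OF ij]) (auto simp: G_def)
  finally show "(\<integral>\<omega>. H \<omega> \<partial>M) \<le> (1 - q) * (\<integral>\<omega>. real (U i j s \<omega>) \<partial>M)" .
qed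

lemma U_drift:
  assumes ij: "(i, j) \<in> pairs K"
  shows "(\<integral>\<omega>. real (U i j (Suc s) \<omega>) \<partial>M)
      \<le> 2 * drain_const + (1 - q) * (\<integral>\<omega>. real (U i j s \<omega>) \<partial>M) + (\<integral>\<omega>. real (A i j s \<omega>) \<partial>M)"
proof -
  have i: "i \<in> {1..K}" and j: "j \<in> {1..K}"
    using ij by (auto simp: pairs_def)
  let ?H = "\<lambda>\<omega>. if U i j s \<omega> \<le> F i j s \<omega> then real (F i j s \<omega>) - real (R i j s \<omega>) else 0"
  note ints = exhausted_bound_integral(1)[OF i] exhausted_bound_integral(1)[OF j]
    integral_attempted_residual(1)[OF ij] A_integrable[OF ij]
  have "(\<integral>\<omega>. real (U i j (Suc s) \<omega>) \<partial>M)
      \<le> (\<integral>\<omega>. exhausted_bound i s \<omega> + exhausted_bound j s \<omega> + ?H \<omega> + real (A i j s \<omega>) \<partial>M)"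
    using ints U_Suc_le[OF ij] by (intro integral_mono U_integrable[OF ij]) auto
  also have "\<dots> = (\<integral>\<omega>. exhausted_bound i s \<omega> \<partial>M) + (\<integral>\<omega>. exhausted_bound j s \<omega> \<partial>M)
      + (\<integral>\<omega>. ?H \<omega> \<partial>M) + (\<integral>\<omega>. real (A i j s \<omega>) \<partial>M)"
    using ints by simp
  finally show ?thesis
    using exhausted_bound_integral(2)[OF i, of s] exhausted_bound_integral(2)[OF j, of s]
      integral_attempted_residual(2)[OF ij, of s] by linarith
qed

lemma U_cesaro_mean:
  assumes ij: "(i, j) \<in> pairs K" and t: "t \<ge> 1"
  shows "(\<Sum>s<t. \<integral>\<omega>. real (U i j s \<omega>) \<partial>M)
      \<le> (2 * drain_const + arrival_const + lam i j + slack) / q * real t"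
proof -
  have "q * (\<Sum>s<t. \<integral>\<omega>. real (U i j s \<omega>) \<partial>M)
      \<le> 2 * drain_const * real t + (\<Sum>s<t. \<integral>\<omega>. real (A i j s \<omega>) \<partial>M)"
    by (rule sum_le_from_contraction) (use init U_drift[OF ij] in \<open>auto intro: integral_nonneg_AE\<close>)
  also have "(\<Sum>s<t. \<integral>\<omega>. real (A i j s \<omega>) \<partial>M) = (\<integral>\<omega>. arrivals i j t \<omega> \<partial>M)"
    using A_integrable[OF ij] by (simp add: arrivals_def)
  also have "\<dots> \<le> arrival_const * real t + (lam i j + slack) * real t"
    using arrivals_integral(2)[OF ij t] arrival_const(1) t
    by (smt (verit) mult_le_cancel_left1 of_nat_1 of_nat_mono)
  finally show ?thesis
    using q by (simp add: field_simps)
qed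

theorem switch_stable: "stable M K U"
  unfolding stable_def
  using cesaro_tail_prob_tendsto_zero[OF U_integrable _ U_cesaro_mean] by auto

end

theorem theorem6:
  fixes M :: "'a measure" and K :: nat
    and p :: "nat \<Rightarrow> real" and q :: "real" and lam :: "nat \<Rightarrow> nat \<Rightarrow> real"
    and eps :: real and Amax :: real
    and C :: "nat \<Rightarrow> nat \<Rightarrow> 'a \<Rightarrow> nat"
    and A :: "nat \<Rightarrow> nat \<Rightarrow> nat \<Rightarrow> 'a \<Rightarrow> nat"
    and S :: "nat \<Rightarrow> nat \<Rightarrow> nat \<Rightarrow> nat \<Rightarrow> 'a \<Rightarrow> nat"
    and F U E R :: "nat \<Rightarrow> nat \<Rightarrow> nat \<Rightarrow> 'a \<Rightarrow> nat"
    and E0 :: "nat \<Rightarrow> nat \<Rightarrow> 'a \<Rightarrow> nat"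
  assumes M: "prob_space M"
    and q: "0 < q" "q \<le> 1"
    \<comment> \<open>exogenous randomness: generations, arrival processes (per unordered pair), swap coins,
        all mutually independent\<close>
    and indep: "prob_space.indep_vars M (\<lambda>_. seqM) (sources C A S) (src_index K)"
    and C_bern: "\<And>i t. i \<in> {1..K} \<Longrightarrow> (\<forall>\<omega>\<in>space M. C i t \<omega> \<le> 1)
                   \<and> measure M {\<omega> \<in> space M. C i t \<omega> = 1} = p i"
    and S_sym: "\<And>i j t k. S i j t k = S j i t k"
    and S_bern: "\<And>i j t k. (i, j) \<in> pairs K \<Longrightarrow> (\<forall>\<omega>\<in>space M. S i j t k \<omega> \<le> 1)
                   \<and> measure M {\<omega> \<in> space M. S i j t k \<omega> = 1} = q"
    and A_sym: "\<And>i j t. A i j t = A j i t"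
    and A_erg: "\<And>i j. (i, j) \<in> pairs K \<Longrightarrow> stationary_ergodic_rate M (A i j) (lam i j)"
    and A_mom: "\<And>i j t. (i, j) \<in> pairs K \<Longrightarrow>
        AE \<omega> in M. nn_cond_exp M (history M K E U A R C t)
                       (\<lambda>\<omega>. ennreal ((real (A i j t \<omega>))\<^sup>2)) \<omega> \<le> ennreal (Amax\<^sup>2)"
    \<comment> \<open>capacity condition\<close>
    and eps: "eps > 0"
    and Lam: "in_Lambda K p q (\<lambda>i j. lam i j + eps)"
    \<comment> \<open>Assumption 1\<close>
    and assm1: "\<And>eps'. eps' > 0 \<Longrightarrow> \<exists>c1::real. \<forall>t \<ge> 1. \<forall>(i, j) \<in> pairs K.
        (\<integral>\<^sup>+ \<omega>. indicator {\<omega> \<in> space M. \<exists>(i', j') \<in> pairs K.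
                 \<bar>(\<Sum>\<tau> < t. real (A i' j' \<tau> \<omega>)) / real t - lam i' j'\<bar> > eps'} \<omega>
              * ennreal (\<Sum>\<tau> < t. real (A i j \<tau> \<omega>)) \<partial>M) \<le> ennreal c1"
    \<comment> \<open>dynamics\<close>
    and init: "\<And>i j \<omega>. U i j 0 \<omega> = 0 \<and> E i j 0 \<omega> = 0 \<and> E0 i 0 \<omega> = 0"
    and R_def: "\<And>i j t \<omega>. (i, j) \<in> pairs K \<Longrightarrow> R i j t \<omega> = (\<Sum>k < F i j t \<omega>. S i j t k \<omega>)"
    and U_step: "\<And>i j t \<omega>. (i, j) \<in> pairs K \<Longrightarrow>
        U i j (Suc t) \<omega> = (U i j t \<omega> - E i j t \<omega> - R i j t \<omega>) + A i j t \<omega>"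
    and E_step: "\<And>i j t \<omega>. (i, j) \<in> pairs K \<Longrightarrow>
        E i j (Suc t) \<omega> = (E i j t \<omega> + R i j t \<omega>) - U i j t \<omega>"
    and E0_step: "\<And>i t \<omega>. i \<in> {1..K} \<Longrightarrow>
        E0 i (Suc t) \<omega> = E0 i t \<omega> - (\<Sum>j \<in> {1..K} - {i}. F i j t \<omega>) + C i t \<omega>"
    \<comment> \<open>the protocol: non-anticipating and on-demand\<close>
    and F_meas: "\<And>i j t. (i, j) \<in> pairs K \<Longrightarrow>
        F i j t \<in> measurable (past M K A C S t) (count_space UNIV)"
    and F_sym: "\<And>i j t \<omega>. F i j t \<omega> = F j i t \<omega>"
    and od_cap: "\<And>j t \<omega>. j \<in> {1..K} \<Longrightarrow> (\<Sum>i \<in> {1..K} - {j}. F i j t \<omega>) \<le> E0 j t \<omega>"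
    and od_dem: "\<And>i j t \<omega>. (i, j) \<in> pairs K \<Longrightarrow> F i j t \<omega> \<le> U i j t \<omega>"
    and od_max: "\<And>i j t \<omega>. (i, j) \<in> pairs K \<Longrightarrow>
        (E0 i t \<omega> - (\<Sum>k \<in> {1..K} - {i}. F i k t \<omega>)) * (E0 j t \<omega> - (\<Sum>k \<in> {1..K} - {j}. F k j t \<omega>))
          * (U i j t \<omega> - F i j t \<omega>) = 0"
  shows "stable M K U"
proof -
  interpret quantum_switch M K p q lam eps C A S F U E R E0
    by (intro quantum_switch.intro quantum_switch_axioms.intro) (fact assms)+
  show ?thesis
    by (rule switch_stable)
qed

end
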